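(* Let $F$ be a Banach lattice, $E$ a Banach space and $S\in\mathcal{L}(F,E)$. The following are equivalent: (i) for every disjoint sequence $(f_n)$ of nonzero elements of $F$, $S$ is not bounded from below on $\overline{\mathrm{span}}\{f_n\}$; (ii) for every such $(f_n)$, the restriction of $S$ to $\overline{\mathrm{span}}\{f_n\}$ is strictly singular; (iii) the restriction of $S$ to every anti-dispersed closed subspace of $F$ is strictly singular; (iv) no restriction of $S$ to a non-dispersed closed subspace of $F$ is bounded from below; (v) no restriction of $S$ to a non-dispersed closed subspace of $F$ is upper semi-Fredholm; (vi) every non-dispersed closed subspace $G$ of $F$ contains an almost disjoint sequence $(g_n)$ with $\|Sg_n\|\to0$. An operator satisfying these conditions is called disjointly strictly singular (DSS).
   Context: $\mathrm{S}_X$ is the unit sphere; $x,y$ disjoint means $|x|\wedge|y|=0$. A sequence $(g_n)$ in the unit sphere of a subspace $G$ is almost disjoint if there is a disjoint $(f_n)\subset F$ with $\|f_n-g_n\|\to0$. A subspace is dispersed if it contains no almost disjoint sequence; a closed subspace is anti-dispersed if it contains no infinite-dimensional closed dispersed subspace. An operator is upper semi-Fredholm if it has finite-dimensional kernel and closed range, and strictly singular if no restriction to an infinite-dimensional subspace is bounded from below. *)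

theory Defs
  imports "HOL-Analysis.Analysis"
begin

class banach_lattice = banach + ordered_real_vector + lattice +
  assumes lattice_norm: "sup x (-x) \<le> sup y (-y) \<Longrightarrow> norm x \<le> norm y"

definition labs :: "'a::banach_lattice \<Rightarrow> 'a" where
  "labs x = sup x (-x)"

instance real :: banach_lattice
  by standard (auto simp: sup_real_def)

definition ldisjoint :: "'a::banach_lattice \<Rightarrow> 'a \<Rightarrow> bool" where
  "ldisjoint x y \<longleftrightarrow> inf (labs x) (labs y) = 0"

definition disjoint_seq :: "(nat \<Rightarrow> 'a::banach_lattice) \<Rightarrow> bool" where
  "disjoint_seq f \<longleftrightarrow> (\<forall>n m. n \<noteq> m \<longrightarrow> ldisjoint (f n) (f m))"

definition closed_subspace :: "'a::real_normed_vector set \<Rightarrow> bool" where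
  "closed_subspace G \<longleftrightarrow> subspace G \<and> closed G"

definition infinite_dimensional :: "'a::real_vector set \<Rightarrow> bool" where
  "infinite_dimensional H \<longleftrightarrow> \<not> (\<exists>B. finite B \<and> span B = H)"

definition finite_dimensional :: "'a::real_vector set \<Rightarrow> bool" where
  "finite_dimensional H \<longleftrightarrow> (\<exists>B. finite B \<and> span B = H)"

definition almost_disjoint_in :: "'a::banach_lattice set \<Rightarrow> (nat \<Rightarrow> 'a) \<Rightarrow> bool" where
  "almost_disjoint_in G g \<longleftrightarrow>
     (\<forall>n. g n \<in> G \<and> norm (g n) = 1) \<and>
     (\<exists>f. disjoint_seq f \<and> (\<lambda>n. norm (f n - g n)) \<longlonglongrightarrow> 0)"

definition dispersed :: "'a::banach_lattice set \<Rightarrow> bool" where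
  "dispersed G \<longleftrightarrow> subspace G \<and> \<not> (\<exists>g. almost_disjoint_in G g)"

definition anti_dispersed :: "'a::banach_lattice set \<Rightarrow> bool" where
  "anti_dispersed G \<longleftrightarrow> closed_subspace G \<and>
     \<not> (\<exists>H. H \<subseteq> G \<and> closed_subspace H \<and> infinite_dimensional H \<and> dispersed H)"

definition bounded_below_on :: "('a::real_normed_vector \<Rightarrow> 'b::real_normed_vector) \<Rightarrow> 'a set \<Rightarrow> bool" where
  "bounded_below_on S G \<longleftrightarrow> (\<exists>c>0. \<forall>x\<in>G. c * norm x \<le> norm (S x))"

definition strictly_singular_on :: "('a::real_normed_vector \<Rightarrow> 'b::real_normed_vector) \<Rightarrow> 'a set \<Rightarrow> bool" where
  "strictly_singular_on S G \<longleftrightarrow>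
     (\<forall>H. subspace H \<and> H \<subseteq> G \<and> infinite_dimensional H \<longrightarrow> \<not> bounded_below_on S H)"

definition upper_semi_fredholm_on :: "('a::real_normed_vector \<Rightarrow> 'b::real_normed_vector) \<Rightarrow> 'a set \<Rightarrow> bool" where
  "upper_semi_fredholm_on S G \<longleftrightarrow>
     finite_dimensional {x\<in>G. S x = 0} \<and> closed (S ` G)"

end

theory Submission
  imports Defs "HOL-Library.Lattice_Algebras"
begin

text \<open>All six conditions are linked through almost disjoint sequences on which S tends to 0.
  If S is not bounded below on the closed span of any disjoint sequence, take an almost disjoint
  sequence g in a non-dispersed subspace G together with its disjoint companion f; disjoint blocks
  of f on which S is almost zero, carried over to G by the perturbation g, give an almost disjoint
  sequence in G on which S tends to 0. Such a sequence excludes a lower bound and also the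
  upper semi-Fredholm property: by the open mapping theorem it lies eventually near the
  finite-dimensional kernel, while a disjoint sequence of norm about 1 cannot stay near a
  finite-dimensional space. Finally, a gliding hump shows that every infinite-dimensional subspace
  of the closed span of a disjoint sequence contains an almost disjoint sequence, so these spans
  are anti-dispersed, which ties the strict singularity conditions to the others.\<close>

context banach_lattice begin
subclass lattice_ab_group_add ..
end

section \<open>Absolute value and disjointness in a Banach lattice\<close>

lemma scaleR_sup_nonneg:
  fixes u v :: "'a::banach_lattice"
  assumes "0 \<le> c"
  shows "c *\<^sub>R sup u v = sup (c *\<^sub>R u) (c *\<^sub>R v)"
proof (cases "c = 0")
  case False
  with assms have c: "0 < c" by simp
  have "sup u v \<le> (1/c) *\<^sub>R sup (c *\<^sub>R u) (c *\<^sub>R v)"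
  proof (rule sup_least)
    show "u \<le> (1/c) *\<^sub>R sup (c *\<^sub>R u) (c *\<^sub>R v)"
      using scaleR_left_mono[of "c *\<^sub>R u" "sup (c *\<^sub>R u) (c *\<^sub>R v)" "1/c"] c by simp
    show "v \<le> (1/c) *\<^sub>R sup (c *\<^sub>R u) (c *\<^sub>R v)"
      using scaleR_left_mono[of "c *\<^sub>R v" "sup (c *\<^sub>R u) (c *\<^sub>R v)" "1/c"] c by simp
  qed
  then have "c *\<^sub>R sup u v \<le> c *\<^sub>R ((1/c) *\<^sub>R sup (c *\<^sub>R u) (c *\<^sub>R v))"
    using assms by (rule scaleR_left_mono)
  then have "c *\<^sub>R sup u v \<le> sup (c *\<^sub>R u) (c *\<^sub>R v)"
    using c by simp
  moreover have "sup (c *\<^sub>R u) (c *\<^sub>R v) \<le> c *\<^sub>R sup u v"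
    by (simp add: assms scaleR_left_mono)
  ultimately show ?thesis by (rule antisym)
qed simp

lemma scaleR_inf_nonneg:
  fixes u v :: "'a::banach_lattice"
  assumes "0 \<le> c"
  shows "c *\<^sub>R inf u v = inf (c *\<^sub>R u) (c *\<^sub>R v)"
proof -
  have "c *\<^sub>R inf u v = - sup (c *\<^sub>R - u) (c *\<^sub>R - v)"
    by (simp only: inf_eq_neg_sup[of u] scaleR_minus_right scaleR_sup_nonneg[OF assms])
  also have "\<dots> = inf (c *\<^sub>R u) (c *\<^sub>R v)"
    by (simp only: scaleR_minus_right inf_eq_neg_sup[of "c *\<^sub>R u"])
  finally show ?thesis .
qed

lemma labs_nonneg: "0 \<le> labs (x::'a::banach_lattice)"
proof -
  have "x + (-x) \<le> labs x + labs x" unfolding labs_def by (intro add_mono) auto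
  then have "0 \<le> labs x + labs x" by simp
  also have "labs x + labs x = (2::real) *\<^sub>R labs x" by (rule scaleR_2[symmetric])
  finally have h: "0 \<le> (2::real) *\<^sub>R labs x" .
  have "0 \<le> (1/2::real) *\<^sub>R ((2::real) *\<^sub>R labs x)" by (rule scaleR_nonneg_nonneg[OF _ h]) simp
  also have "(1/2::real) *\<^sub>R ((2::real) *\<^sub>R labs x) = labs x"
    by (simp only: scaleR_scaleR) simp
  finally show ?thesis .
qed

lemma labs_uminus [simp]: "labs (- (x::'a::banach_lattice)) = labs x"
  unfolding labs_def by (simp add: sup_commute)

lemma labs_triangle: "labs ((x::'a::banach_lattice) + y) \<le> labs x + labs y"
  unfolding labs_def
  by (intro sup_least; (simp only: minus_add_distrib)?; intro add_mono) (auto simp: add.commute)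

lemma labs_scaleR: "labs (a *\<^sub>R (x::'a::banach_lattice)) = \<bar>a\<bar> *\<^sub>R labs x"
proof (cases "0 \<le> a")
  case True
  then show ?thesis unfolding labs_def using scaleR_sup_nonneg[OF True, of x "-x"] by simp
next
  case False
  then have "a *\<^sub>R x = \<bar>a\<bar> *\<^sub>R (-x)" by simp
  then show ?thesis unfolding labs_def using scaleR_sup_nonneg[of "\<bar>a\<bar>" "-x" "x"]
    by (simp add: sup_commute)
qed

lemma norm_le_if_labs_le: "labs (x::'a::banach_lattice) \<le> labs y \<Longrightarrow> norm x \<le> norm y"
  using lattice_norm unfolding labs_def by blast

lemma norm_labs [simp]: "norm (labs (x::'a::banach_lattice)) = norm x"
proof -
  have "labs (labs x) = labs x"
    using labs_nonneg[of x] unfolding labs_def[of "labs x"]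
    by (intro sup_absorb1) (meson order_trans neg_le_0_iff_le)
  then show ?thesis using norm_le_if_labs_le[of x "labs x"] norm_le_if_labs_le[of "labs x" x] by simp
qed


lemma inf_add_le_add_inf:
  fixes a b c :: "'a::banach_lattice"
  assumes "0 \<le> a" "0 \<le> b" "0 \<le> c"
  shows "inf (a + b) c \<le> inf a c + inf b c"
proof -
  have "inf a c + inf b c = inf (inf a c + b) (inf a c + c)"
    by (simp add: add_inf_distrib_left)
  also have "\<dots> = inf (inf (a + b) (c + b)) (inf (a + c) (c + c))"
    by (simp add: add_inf_distrib_right)
  finally have eq: "inf a c + inf b c = inf (inf (a + b) (c + b)) (inf (a + c) (c + c))" .
  have "inf (a + b) c \<le> c + b" using assms by (meson inf_le2 le_add_same_cancel1 order_trans)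
  moreover have "inf (a + b) c \<le> a + c" using assms by (meson inf_le2 le_add_same_cancel2 order_trans)
  moreover have "inf (a + b) c \<le> c + c" using assms by (meson inf_le2 le_add_same_cancel2 order_trans)
  ultimately show ?thesis unfolding eq by simp
qed


lemma ldisjoint_sym: "ldisjoint x y \<longleftrightarrow> ldisjoint y x"
  unfolding ldisjoint_def by (simp add: inf_commute)

lemma ldisjoint_iff_le: "ldisjoint x y \<longleftrightarrow> inf (labs x) (labs y) \<le> 0"
  unfolding ldisjoint_def using labs_nonneg[of x] labs_nonneg[of y] by (simp add: eq_iff)

lemma ldisjoint_zero [simp]: "ldisjoint 0 y"
  unfolding ldisjoint_iff_le labs_def by simp

lemma ldisjoint_add:
  assumes "ldisjoint x z" "ldisjoint y z"
  shows "ldisjoint (x + y) z"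
proof -
  have "inf (labs (x + y)) (labs z) \<le> inf (labs x + labs y) (labs z)"
    using labs_triangle by (meson inf_mono order_refl)
  also have "\<dots> \<le> inf (labs x) (labs z) + inf (labs y) (labs z)"
    by (intro inf_add_le_add_inf labs_nonneg)
  also have "\<dots> = 0" using assms unfolding ldisjoint_def by simp
  finally show ?thesis unfolding ldisjoint_iff_le .
qed

lemma ldisjoint_scaleR:
  assumes "ldisjoint x z"
  shows "ldisjoint (a *\<^sub>R x) z"
proof -
  define c where "c = max 1 \<bar>a\<bar>"
  have c: "0 \<le> c" "1 \<le> c" "\<bar>a\<bar> \<le> c" unfolding c_def by auto
  have "\<bar>a\<bar> *\<^sub>R labs x \<le> c *\<^sub>R labs x" "1 *\<^sub>R labs z \<le> c *\<^sub>R labs z"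
    using c by (intro scaleR_right_mono labs_nonneg; simp)+
  then have "inf (labs (a *\<^sub>R x)) (labs z) \<le> inf (c *\<^sub>R labs x) (c *\<^sub>R labs z)"
    unfolding labs_scaleR by (intro inf_mono) simp_all
  also have "\<dots> = c *\<^sub>R inf (labs x) (labs z)" using scaleR_inf_nonneg[OF c(1)] by metis
  also have "\<dots> = 0" using assms unfolding ldisjoint_def by simp
  finally show ?thesis unfolding ldisjoint_iff_le .
qed

lemma ldisjoint_sum:
  assumes "finite A" "\<And>i. i \<in> A \<Longrightarrow> ldisjoint (h i) z"
  shows "ldisjoint (sum h A) z"
  using assms by (induction A rule: finite_induct) (auto intro: ldisjoint_add)

lemma norm_le_norm_add_if_ldisjoint:
  fixes u r :: "'a::banach_lattice"
  assumes "ldisjoint u r"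
  shows "norm u \<le> norm (u + r)"
proof -
  have "labs u \<le> labs (u + r) + labs r"
    using labs_triangle[of "u + r" "-r"] by simp
  then have "labs u = inf (labs (u + r) + labs r) (labs u)" by (simp add: inf_absorb2)
  also have "\<dots> \<le> inf (labs (u + r)) (labs u) + inf (labs r) (labs u)"
    by (intro inf_add_le_add_inf labs_nonneg)
  also have "inf (labs r) (labs u) = 0" using assms unfolding ldisjoint_def by (simp add: inf_commute)
  finally have "labs u \<le> labs (u + r)" by (simp add: le_infE)
  then show ?thesis by (rule norm_le_if_labs_le)
qed

lemma ldisjoint_scaleR_both: "ldisjoint x y \<Longrightarrow> ldisjoint (a *\<^sub>R x) (b *\<^sub>R y)"
  by (rule ldisjoint_scaleR, subst ldisjoint_sym, rule ldisjoint_scaleR, subst ldisjoint_sym)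

lemma disjoint_seq_scaleR:
  assumes "disjoint_seq f"
  shows "disjoint_seq (\<lambda>n. c n *\<^sub>R f n)"
  unfolding disjoint_seq_def
proof (intro allI impI)
  fix n m :: nat assume "n \<noteq> m"
  then have "ldisjoint (f n) (f m)" using assms unfolding disjoint_seq_def by blast
  then show "ldisjoint (c n *\<^sub>R f n) (c m *\<^sub>R f m)" by (rule ldisjoint_scaleR_both)
qed

lemma ldisjoint_disjoint_seq_sums:
  assumes "disjoint_seq f" "finite A" "finite B" "A \<inter> B = {}"
  shows "ldisjoint (\<Sum>n\<in>A. a n *\<^sub>R f n) (\<Sum>n\<in>B. b n *\<^sub>R f n)"
proof (rule ldisjoint_sum[OF assms(2)])
  fix n assume "n \<in> A"
  have "ldisjoint (b m *\<^sub>R f m) (a n *\<^sub>R f n)" if "m \<in> B" for m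
  proof (rule ldisjoint_scaleR_both)
    have "m \<noteq> n" using that \<open>n \<in> A\<close> assms(4) by blast
    then show "ldisjoint (f m) (f n)" using assms(1) unfolding disjoint_seq_def by simp
  qed
  then show "ldisjoint (a n *\<^sub>R f n) (\<Sum>n\<in>B. b n *\<^sub>R f n)"
    by (subst ldisjoint_sym) (intro ldisjoint_sum assms(3))
qed

lemma norm_term_le_norm_disjoint_sum:
  assumes "finite A" "k \<in> A" "\<And>n m. n \<in> A \<Longrightarrow> m \<in> A \<Longrightarrow> n \<noteq> m \<Longrightarrow> ldisjoint (f n) (f m)"
  shows "norm (a k *\<^sub>R f k) \<le> norm (\<Sum>n\<in>A. a n *\<^sub>R f n)"
proof -
  have "(\<Sum>n\<in>A. a n *\<^sub>R f n) = a k *\<^sub>R f k + (\<Sum>n\<in>A - {k}. a n *\<^sub>R f n)"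
    using assms by (simp add: sum.remove)
  moreover have "ldisjoint (a k *\<^sub>R f k) (\<Sum>n\<in>A - {k}. a n *\<^sub>R f n)"
    using assms by (subst ldisjoint_sym, intro ldisjoint_sum ldisjoint_scaleR_both) auto
  ultimately show ?thesis using norm_le_norm_add_if_ldisjoint by metis
qed

lemma norm_term_le_norm_disjoint_seq_sum:
  "disjoint_seq f \<Longrightarrow> finite A \<Longrightarrow> k \<in> A \<Longrightarrow> norm (a k *\<^sub>R f k) \<le> norm (\<Sum>n\<in>A. a n *\<^sub>R f n)"
  by (rule norm_term_le_norm_disjoint_sum) (auto simp: disjoint_seq_def)

lemma inj_disjoint_seq:
  assumes "disjoint_seq f" "\<And>n. f n \<noteq> 0"
  shows "inj f"
proof (rule injI, rule ccontr)
  fix n m assume "f n = f m" "n \<noteq> m"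
  then have "labs (f n) = 0" using assms(1) unfolding disjoint_seq_def ldisjoint_def by force
  then show False using assms(2) norm_labs[of "f n"] by simp
qed

lemma independent_range_disjoint_seq:
  assumes "disjoint_seq f" "\<And>n. f n \<noteq> 0"
  shows "independent (range f)"
  unfolding independent_explicit_finite_subsets
proof (intro allI impI ballI)
  fix T u v assume T: "T \<subseteq> range f" "finite T" "(\<Sum>v\<in>T. u v *\<^sub>R v) = 0" and "v \<in> T"
  have "ldisjoint x y" if xy: "x \<in> T" "y \<in> T" "x \<noteq> y" for x y
  proof -
    obtain n m where nm: "x = f n" "y = f m" using xy(1,2) T(1) by blast
    then have "n \<noteq> m" using xy(3) by auto
    then show ?thesis using nm assms(1) unfolding disjoint_seq_def by simp
  qed
  then have "norm (u v *\<^sub>R v) \<le> norm (\<Sum>v\<in>T. u v *\<^sub>R v)"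
    using norm_term_le_norm_disjoint_sum[OF T(2) \<open>v \<in> T\<close>, of "\<lambda>v. v"] by blast
  then have "norm (u v *\<^sub>R v) = 0" using T(3) by (simp only: norm_zero) (rule antisym; simp)
  then have "u v *\<^sub>R v = 0" by (simp only: norm_eq_zero)
  moreover have "v \<noteq> 0" using T(1) \<open>v \<in> T\<close> assms(2) by auto
  ultimately show "u v = 0" by simp
qed

section \<open>Finite-dimensional subspaces of normed spaces\<close>

lemma subspace_closure:
  assumes "subspace (A::'a::real_normed_vector set)"
  shows "subspace (closure A)"
  unfolding subspace_def
proof (intro conjI ballI allI)
  show "0 \<in> closure A" using assms closure_subset subspace_0 by blast
next
  fix x y assume "x \<in> closure A" "y \<in> closure A"
  then obtain s t where st: "\<forall>n. s n \<in> A" "s \<longlonglongrightarrow> x" "\<forall>n. t n \<in> A" "t \<longlonglongrightarrow> y"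
    unfolding closure_sequential by blast
  then have "\<forall>n. s n + t n \<in> A" "(\<lambda>n. s n + t n) \<longlonglongrightarrow> x + y"
    using assms subspace_add tendsto_add by blast+
  then show "x + y \<in> closure A" unfolding closure_sequential by (intro exI conjI)
next
  fix c x assume "x \<in> closure A"
  then obtain s where "\<forall>n. s n \<in> A" "s \<longlonglongrightarrow> x"
    unfolding closure_sequential by blast
  then have "\<forall>n. c *\<^sub>R s n \<in> A" "(\<lambda>n. c *\<^sub>R s n) \<longlonglongrightarrow> c *\<^sub>R x"
    using assms subspace_scale tendsto_scaleR tendsto_const by blast+
  then show "c *\<^sub>R x \<in> closure A" unfolding closure_sequential by (intro exI conjI)
qed

lemma closed_subspace_closure: "subspace A \<Longrightarrow> closed_subspace (closure A)"
  by (simp add: closed_subspace_def subspace_closure)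

lemma span_imageE:
  assumes "x \<in> span (f ` I)"
  obtains A a where "finite A" "A \<subseteq> I" "x = (\<Sum>n\<in>A. a n *\<^sub>R f n)"
proof -
  from assms obtain t r where t: "finite t" "t \<subseteq> f ` I" "x = (\<Sum>v\<in>t. r v *\<^sub>R v)"
    unfolding span_explicit by blast
  from t(2) have "\<exists>A. A \<subseteq> I \<and> inj_on f A \<and> t = f ` A" by (simp add: subset_image_inj)
  then obtain A where A: "A \<subseteq> I" "inj_on f A" "t = f ` A" by blast
  have "finite A" using finite_image_iff[OF A(2)] t(1) A(3) by simp
  have "x = (\<Sum>v\<in>f ` A. r v *\<^sub>R v)" using t(3) A(3) by (simp only:)
  also have "\<dots> = (\<Sum>n\<in>A. r (f n) *\<^sub>R f n)" by (rule sum.reindex_cong[OF A(2) refl]) simp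
  finally have "x = (\<Sum>n\<in>A. r (f n) *\<^sub>R f n)" .
  then show ?thesis by (rule that[OF \<open>finite A\<close> A(1)])
qed

lemma nontrivial_combination_in_small_span:
  assumes "finite B" "finite I" "card B < card I" "\<And>k. k \<in> I \<Longrightarrow> w k \<in> span B"
  obtains c where "\<exists>k\<in>I. c k \<noteq> 0" "(\<Sum>k\<in>I. c k *\<^sub>R w k) = 0"
proof (cases "inj_on w I")
  case True
  have fin: "finite (w ` I)" using assms by auto
  have card: "card (w ` I) = card I" using True card_image by blast
  have "dependent (w ` I)"
  proof (rule ccontr)
    assume "\<not> dependent (w ` I)"
    then have "card (w ` I) \<le> card B"
      using independent_span_bound[OF assms(1)] assms(4) by auto
    then show False using card assms(3) by simp
  qed
  then obtain u where u: "\<exists>v\<in>w ` I. u v \<noteq> 0" "(\<Sum>v\<in>w ` I. u v *\<^sub>R v) = 0"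
    using dependent_finite[OF fin] by blast
  show ?thesis
  proof (rule that[of "\<lambda>k. u (w k)"])
    show "\<exists>k\<in>I. u (w k) \<noteq> 0" using u(1) by blast
    show "(\<Sum>k\<in>I. u (w k) *\<^sub>R w k) = 0" using u(2) True by (simp add: sum.reindex)
  qed
next
  case False
  then obtain k1 k2 where k: "k1 \<in> I" "k2 \<in> I" "k1 \<noteq> k2" "w k1 = w k2"
    unfolding inj_on_def by blast
  define c where "c = (\<lambda>k. if k = k1 then 1 else if k = k2 then -1 else (0::real))"
  have "(\<Sum>k\<in>I. c k *\<^sub>R w k) = (\<Sum>k\<in>{k1,k2}. c k *\<^sub>R w k)"
    using k assms(2) by (intro sum.mono_neutral_right) (auto simp: c_def)
  also have "\<dots> = 0" using k by (simp add: c_def)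
  finally have s0: "(\<Sum>k\<in>I. c k *\<^sub>R w k) = 0" .
  have "\<exists>k\<in>I. c k \<noteq> 0" using k by (auto simp: c_def)
  then show ?thesis using s0 by (rule that)
qed

lemma normalized_nontrivial_combination_in_small_span:
  assumes "finite B" "finite I" "card B < card I" "\<And>k. k \<in> I \<Longrightarrow> w k \<in> span B"
  obtains c j where "j \<in> I" "c j = 1" "\<And>k. k \<in> I \<Longrightarrow> \<bar>c k\<bar> \<le> 1" "(\<Sum>k\<in>I. c k *\<^sub>R w k) = 0"
proof -
  obtain c where c: "\<exists>k\<in>I. c k \<noteq> 0" "(\<Sum>k\<in>I. c k *\<^sub>R w k) = 0"
    by (rule nontrivial_combination_in_small_span[OF assms])
  then have "I \<noteq> {}" by blast
  then have "Max ((\<lambda>k. \<bar>c k\<bar>) ` I) \<in> (\<lambda>k. \<bar>c k\<bar>) ` I"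
    using assms(2) by (intro Max_in) auto
  then obtain j where j: "j \<in> I" "\<bar>c j\<bar> = Max ((\<lambda>k. \<bar>c k\<bar>) ` I)"
    by (metis imageE)
  have cle: "\<bar>c k\<bar> \<le> \<bar>c j\<bar>" if "k \<in> I" for k
    unfolding j(2) using assms(2) that by (intro Max_ge) auto
  have "c j \<noteq> 0"
  proof -
    obtain k where "k \<in> I" "c k \<noteq> 0" using c(1) by blast
    then show ?thesis using cle[of k] by auto
  qed
  show ?thesis
  proof (rule that[of j "\<lambda>k. c k / c j"])
    show "j \<in> I" by (rule j(1))
    show "c j / c j = 1" using \<open>c j \<noteq> 0\<close> by simp
    show "\<bar>c k / c j\<bar> \<le> 1" if "k \<in> I" for k
      using cle[OF that] \<open>c j \<noteq> 0\<close> by (simp add: abs_divide)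
    have "(\<Sum>k\<in>I. (c k / c j) *\<^sub>R w k) = (1 / c j) *\<^sub>R (\<Sum>k\<in>I. c k *\<^sub>R w k)"
      by (simp add: scaleR_sum_right)
    then show "(\<Sum>k\<in>I. (c k / c j) *\<^sub>R w k) = 0" using c(2) by simp
  qed
qed

lemma closed_span_if_coefficient_bound:
  fixes B :: "'a::real_normed_vector set"
  assumes "finite B" "m > 0" "\<And>u. m * (\<Sum>b\<in>B. \<bar>u b\<bar>) \<le> norm (\<Sum>b\<in>B. u b *\<^sub>R b)"
  shows "closed (span B)"
  unfolding closed_sequential_limits
proof (intro allI impI, elim conjE)
  fix x l assume xs: "\<forall>n. x n \<in> span B" and lim: "x \<longlonglongrightarrow> l"
  have "\<forall>n. \<exists>u. x n = (\<Sum>b\<in>B. u b *\<^sub>R b)" using xs span_finite[OF assms(1)] by auto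
  then obtain u where u: "\<And>n. x n = (\<Sum>b\<in>B. u n b *\<^sub>R b)" by metis
  have diff: "x p - x q = (\<Sum>b\<in>B. (u p b - u q b) *\<^sub>R b)" for p q
    by (simp add: u sum_subtractf scaleR_diff_left)
  have C: "Cauchy x" using lim by (rule LIMSEQ_imp_Cauchy)
  have "convergent (\<lambda>n. u n b)" if b: "b \<in> B" for b
  proof -
    have "Cauchy (\<lambda>n. u n b)"
    proof (rule CauchyI)
      fix e :: real assume e: "e > 0"
      then obtain M where M: "\<And>p q. p \<ge> M \<Longrightarrow> q \<ge> M \<Longrightarrow> norm (x p - x q) < e * m"
        using CauchyD[OF C, of "e * m"] assms(2) by auto
      show "\<exists>M. \<forall>p\<ge>M. \<forall>q\<ge>M. norm (u p b - u q b) < e"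
      proof (intro exI allI impI)
        fix p q assume pq: "p \<ge> M" "q \<ge> M"
        have "\<bar>u p b - u q b\<bar> \<le> (\<Sum>b\<in>B. \<bar>u p b - u q b\<bar>)"
          using b assms(1) by (intro member_le_sum) auto
        also have "m * \<dots> \<le> norm (x p - x q)" using assms(3)[of "\<lambda>b. u p b - u q b"] diff by simp
        then have "(\<Sum>b\<in>B. \<bar>u p b - u q b\<bar>) \<le> norm (x p - x q) / m"
          using assms(2) by (simp add: field_simps)
        also have "\<dots> < e" using M[OF pq] assms(2) by (simp add: field_simps)
        finally show "norm (u p b - u q b) < e" by simp
      qed
    qed
    then show ?thesis by (simp add: Cauchy_convergent_iff)
  qed
  then have "\<forall>b\<in>B. \<exists>U. (\<lambda>n. u n b) \<longlonglongrightarrow> U" by (auto simp: convergent_def)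
  then obtain U where U: "\<And>b. b \<in> B \<Longrightarrow> (\<lambda>n. u n b) \<longlonglongrightarrow> U b" by metis
  have "(\<lambda>n. \<Sum>b\<in>B. u n b *\<^sub>R b) \<longlonglongrightarrow> (\<Sum>b\<in>B. U b *\<^sub>R b)"
    by (intro tendsto_sum tendsto_scaleR U tendsto_const)
  moreover have "x = (\<lambda>n. \<Sum>b\<in>B. u n b *\<^sub>R b)" by (rule ext) (rule u)
  ultimately have "x \<longlonglongrightarrow> (\<Sum>b\<in>B. U b *\<^sub>R b)" by simp
  then have "l = (\<Sum>b\<in>B. U b *\<^sub>R b)" using lim LIMSEQ_unique by blast
  then show "l \<in> span B" by (simp add: span_sum span_scale span_base)
qed

lemma abs_scaleR_infdist_span_le:
  assumes "v \<in> span B"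
  shows "\<bar>t\<bar> * infdist a (span B) \<le> norm (t *\<^sub>R a + v)"
proof (cases "t = 0")
  case False
  have "- ((1/t) *\<^sub>R v) \<in> span B" using assms by (intro span_neg span_scale)
  then have "infdist a (span B) \<le> norm (a + (1/t) *\<^sub>R v)"
    using infdist_le[of "- ((1/t) *\<^sub>R v)" "span B" a] by (simp add: dist_norm)
  then have "\<bar>t\<bar> * infdist a (span B) \<le> \<bar>t\<bar> * norm (a + (1/t) *\<^sub>R v)"
    by (simp add: mult_left_mono)
  also have "\<dots> = norm (t *\<^sub>R a + v)"
    using False by (simp add: scaleR_add_right flip: norm_scaleR)
  finally show ?thesis .
qed simp

lemma coefficient_bound_insert:
  fixes B :: "'a::real_normed_vector set"
  assumes B: "finite B" and aB: "a \<notin> span B"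
    and m: "m > 0" "\<And>u. m * (\<Sum>b\<in>B. \<bar>u b\<bar>) \<le> norm (\<Sum>b\<in>B. u b *\<^sub>R b)"
  shows "\<exists>m'>0. \<forall>u. m' * (\<Sum>b\<in>insert a B. \<bar>u b\<bar>) \<le> norm (\<Sum>b\<in>insert a B. u b *\<^sub>R b)"
proof -
  have a: "a \<notin> B" using aB span_base by blast
  have cl: "closed (span B)" by (rule closed_span_if_coefficient_bound[OF B(1) m])
  define d where "d = infdist a (span B)"
  have d: "d > 0" unfolding d_def
    using infdist_pos_not_in_closed[OF cl _ aB] span_zero by blast
  define m' where "m' = 1 / (1/d + (1 + norm a / d) / m)"
  have pos: "1/d + (1 + norm a / d) / m > 0" using d m by (simp add: add_pos_nonneg)
  have m'pos: "m' > 0" unfolding m'_def using pos by simp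
  show ?thesis
  proof (intro exI[of _ m'] conjI allI m'pos)
    fix u :: "'a \<Rightarrow> real"
    define t where "t = u a"
    define v where "v = (\<Sum>b\<in>B. u b *\<^sub>R b)"
    define x where "x = t *\<^sub>R a + v"
    have xeq: "(\<Sum>b\<in>insert a B. u b *\<^sub>R b) = x"
      using B a by (simp add: x_def t_def v_def)
    have seq: "(\<Sum>b\<in>insert a B. \<bar>u b\<bar>) = \<bar>t\<bar> + (\<Sum>b\<in>B. \<bar>u b\<bar>)"
      using B a by (simp add: t_def)
    have "\<bar>t\<bar> * d \<le> norm x"
      unfolding d_def x_def v_def by (rule abs_scaleR_infdist_span_le) (intro span_sum span_scale span_base)
    then have tle: "\<bar>t\<bar> \<le> norm x / d" using d by (simp add: field_simps)
    have "norm v \<le> norm x + norm (t *\<^sub>R a)"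
      using norm_triangle_ineq4[of x "t *\<^sub>R a"] by (simp add: x_def)
    then have vle: "norm v \<le> norm x + \<bar>t\<bar> * norm a" by simp
    have "m * (\<Sum>b\<in>B. \<bar>u b\<bar>) \<le> norm v" using m(2) by (simp add: v_def)
    then have "(\<Sum>b\<in>B. \<bar>u b\<bar>) \<le> norm v / m" using m by (simp add: field_simps)
    also have "\<dots> \<le> (norm x + \<bar>t\<bar> * norm a) / m" using vle m by (simp add: divide_right_mono)
    also have "\<dots> \<le> (norm x + norm x / d * norm a) / m"
      using tle m by (intro divide_right_mono add_left_mono mult_right_mono) auto
    finally have sB: "(\<Sum>b\<in>B. \<bar>u b\<bar>) \<le> (norm x + norm x / d * norm a) / m" .
    have "\<bar>t\<bar> + (\<Sum>b\<in>B. \<bar>u b\<bar>) \<le> norm x / d + (norm x + norm x / d * norm a) / m"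
      using tle sB by linarith
    also have "\<dots> = norm x * (1/d + (1 + norm a / d) / m)" by (simp add: field_simps)
    finally have "\<bar>t\<bar> + (\<Sum>b\<in>B. \<bar>u b\<bar>) \<le> norm x * (1/d + (1 + norm a / d) / m)" .
    then have "m' * (\<bar>t\<bar> + (\<Sum>b\<in>B. \<bar>u b\<bar>)) \<le> m' * (norm x * (1/d + (1 + norm a / d) / m))"
      using m'pos by (intro mult_left_mono) auto
    also have "\<dots> = norm x" unfolding m'_def using pos by simp
    finally show "m' * (\<Sum>b\<in>insert a B. \<bar>u b\<bar>) \<le> norm (\<Sum>b\<in>insert a B. u b *\<^sub>R b)"
      using seq xeq by simp
  qed
qed

lemma independent_coefficient_bound:
  fixes B :: "'a::real_normed_vector set"
  assumes "finite B" "independent B"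
  shows "\<exists>m>0. \<forall>u. m * (\<Sum>b\<in>B. \<bar>u b\<bar>) \<le> norm (\<Sum>b\<in>B. u b *\<^sub>R b)"
  using assms
proof (induction B rule: finite_induct)
  case empty
  show ?case by (intro exI[of _ 1]) simp
next
  case (insert a B)
  have "independent B" and "a \<notin> span B"
    using insert.prems insert.hyps(2) by (auto simp: independent_insert)
  then show ?case using insert.IH coefficient_bound_insert[OF insert.hyps(1)] by blast
qed

lemma finite_basis_if_subset_finite_span:
  assumes "subspace H" "finite B" "H \<subseteq> span B"
  shows "\<exists>B'. finite B' \<and> span B' = H"
proof -
  obtain B' where B': "B' \<subseteq> H" "independent B'" "H \<subseteq> span B'" "card B' = dim H"
    by (rule basis_exists)
  have "B' \<subseteq> span B" using B'(1) assms(3) by blast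
  then have "finite B'" using independent_span_bound[OF assms(2) B'(2)] by blast
  moreover have "span B' = H"
  proof
    show "span B' \<subseteq> H" using B'(1) assms(1) by (rule span_minimal)
    show "H \<subseteq> span B'" by (rule B'(3))
  qed
  ultimately show ?thesis by blast
qed

lemma infinite_dimensional_closure:
  fixes H :: "'a::real_normed_vector set"
  assumes "subspace H" "infinite_dimensional H"
  shows "infinite_dimensional (closure H)"
  unfolding infinite_dimensional_def
proof
  assume "\<exists>B. finite B \<and> span B = closure H"
  then obtain B where B: "finite B" "span B = closure H" by blast
  then have "H \<subseteq> span B" using closure_subset by blast
  then have "\<exists>B'. finite B' \<and> span B' = H" by (rule finite_basis_if_subset_finite_span[OF assms(1) B(1)])
  then show False using assms(2) unfolding infinite_dimensional_def by blast
qed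

lemma infinite_dimensional_independent_subset:
  assumes "subspace H" "infinite_dimensional H"
  shows "\<exists>Hs. finite Hs \<and> card Hs = n \<and> Hs \<subseteq> H \<and> independent Hs"
proof -
  obtain B where B: "B \<subseteq> H" "independent B" "H \<subseteq> span B" "card B = dim H"
    by (rule basis_exists)
  have "span B \<subseteq> H" using B(1) assms(1) by (rule span_minimal)
  then have "span B = H" using B(3) by (rule antisym)
  then have "infinite B" using assms(2) unfolding infinite_dimensional_def by blast
  then have "\<exists>Hs. finite Hs \<and> card Hs = n \<and> Hs \<subseteq> B" by (rule infinite_arbitrarily_large)
  then obtain Hs where Hs: "finite Hs" "card Hs = n" "Hs \<subseteq> B" by blast
  have "independent Hs" using B(2) Hs(3) by (rule independent_mono)
  then show ?thesis using Hs B(1) by blast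
qed

lemma infinite_dimensional_closure_span_disjoint_seq:
  assumes "disjoint_seq f" "\<And>n. f n \<noteq> 0"
  shows "infinite_dimensional (closure (span (range f)))"
  unfolding infinite_dimensional_def
proof
  assume "\<exists>B. finite B \<and> span B = closure (span (range f))"
  then obtain B where B: "finite B" "span B = closure (span (range f))" by blast
  have "f n \<in> span B" for n
    using B(2) closure_subset span_base[of "f n" "range f"] by blast
  then have "range f \<subseteq> span B" by blast
  then have "finite (range f)"
    using independent_span_bound[OF B(1) independent_range_disjoint_seq[OF assms]] by simp
  then have "finite (UNIV :: nat set)"
    by (rule finite_imageD) (rule inj_disjoint_seq[OF assms])
  then show False by simp
qed

lemma bounded_below_on_closure:
  assumes "bounded_linear S" "bounded_below_on S A"
  shows "bounded_below_on S (closure A)"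
proof -
  from assms(2) obtain c where c: "c > 0" "\<forall>x\<in>A. c * norm x \<le> norm (S x)"
    unfolding bounded_below_on_def by blast
  have contS: "continuous_on UNIV S"
    using assms(1) by (simp add: linear_continuous_on)
  have "closed {x. c * norm x \<le> norm (S x)}"
    by (intro closed_Collect_le continuous_intros continuous_on_compose2[OF _ contS]) auto
  moreover have "A \<subseteq> {x. c * norm x \<le> norm (S x)}" using c by auto
  ultimately have "closure A \<subseteq> {x. c * norm x \<le> norm (S x)}" by (rule closure_minimal[rotated])
  then show ?thesis using c unfolding bounded_below_on_def by blast
qed

lemma strictly_singular_onI_closed:
  assumes "bounded_linear S" "closed G"
    and "\<And>H. closed_subspace H \<Longrightarrow> H \<subseteq> G \<Longrightarrow> infinite_dimensional H \<Longrightarrow> \<not> bounded_below_on S H"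
  shows "strictly_singular_on S G"
  unfolding strictly_singular_on_def
proof (intro allI impI notI, elim conjE)
  fix H assume H: "subspace H" "H \<subseteq> G" "infinite_dimensional H" and bb: "bounded_below_on S H"
  have "\<not> bounded_below_on S (closure H)"
  proof (rule assms(3))
    show "closed_subspace (closure H)" by (rule closed_subspace_closure[OF H(1)])
    show "closure H \<subseteq> G" using H(2) assms(2) by (rule closure_minimal)
    show "infinite_dimensional (closure H)" by (rule infinite_dimensional_closure[OF H(1,3)])
  qed
  then show False using bounded_below_on_closure[OF assms(1) bb] by simp
qed

lemma closed_image_if_bounded_below:
  fixes S :: "'a::banach \<Rightarrow> 'b::real_normed_vector"
  assumes S: "bounded_linear S" and G: "subspace G" "closed G" and bb: "bounded_below_on S G"
  shows "closed (S ` G)"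
  unfolding closed_sequential_limits
proof (intro allI impI, elim conjE)
  fix y l assume y: "\<forall>n. y n \<in> S ` G" and lim: "y \<longlonglongrightarrow> l"
  from bb obtain c where c: "c > 0" "\<And>x. x \<in> G \<Longrightarrow> c * norm x \<le> norm (S x)"
    unfolding bounded_below_on_def by blast
  have "\<forall>n. \<exists>x. x \<in> G \<and> y n = S x" using y by blast
  then obtain x where x: "\<forall>n. x n \<in> G \<and> y n = S (x n)"
    by (rule choice[THEN exE])
  text \<open>Preimages of a Cauchy sequence are Cauchy, since S is bounded below on G.\<close>
  have "Cauchy x"
  proof (rule CauchyI)
    fix e :: real assume e: "e > 0"
    obtain M where M: "\<And>m n. m \<ge> M \<Longrightarrow> n \<ge> M \<Longrightarrow> norm (y m - y n) < c * e"
      using CauchyD[OF LIMSEQ_imp_Cauchy[OF lim], of "c * e"] c(1) e by auto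
    show "\<exists>M. \<forall>m\<ge>M. \<forall>n\<ge>M. norm (x m - x n) < e"
    proof (intro exI allI impI)
      fix m n assume mn: "m \<ge> M" "n \<ge> M"
      have "x m - x n \<in> G" using subspace_diff[OF G(1)] x by blast
      then have "c * norm (x m - x n) \<le> norm (S (x m - x n))" by (rule c(2))
      also have "S (x m - x n) = y m - y n"
        using x linear_diff[OF bounded_linear.linear[OF S]] by simp
      finally have "c * norm (x m - x n) < c * e" using M[OF mn] by linarith
      then show "norm (x m - x n) < e" using c(1) by simp
    qed
  qed
  then obtain l' where l': "x \<longlonglongrightarrow> l'" using Cauchy_convergent convergent_def by blast
  have "l' \<in> G" using closed_sequentially[OF G(2) _ l'] x by simp
  moreover have "y = (\<lambda>n. S (x n))" using x by auto
  then have "y \<longlonglongrightarrow> S l'" using bounded_linear.tendsto[OF S l'] by simp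
  then have "l = S l'" using lim LIMSEQ_unique by blast
  ultimately show "l \<in> S ` G" by blast
qed

lemma upper_semi_fredholm_on_if_bounded_below:
  fixes S :: "'a::banach \<Rightarrow> 'b::real_normed_vector"
  assumes S: "bounded_linear S" and G: "closed_subspace G" and bb: "bounded_below_on S G"
  shows "upper_semi_fredholm_on S G"
proof -
  have G': "subspace G" "closed G" using G unfolding closed_subspace_def by auto
  from bb obtain c where c: "c > 0" "\<And>x. x \<in> G \<Longrightarrow> c * norm x \<le> norm (S x)"
    unfolding bounded_below_on_def by blast
  have "x = 0" if "x \<in> G" "S x = 0" for x
    using c(2)[OF that(1)] that(2) c(1) by (simp add: mult_le_0_iff)
  then have "{x\<in>G. S x = 0} = span {}"
    using subspace_0[OF G'(1)] linear_0[OF bounded_linear.linear[OF S]] by auto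
  then have "finite_dimensional {x\<in>G. S x = 0}" unfolding finite_dimensional_def by blast
  then show ?thesis
    unfolding upper_semi_fredholm_on_def using closed_image_if_bounded_below[OF S G' bb] by blast
qed

section \<open>The open mapping theorem for a closed range\<close>

lemma baire_closed_subset_cover:
  fixes R :: "'a::complete_space set"
  assumes R: "closed R" "R \<noteq> {}" and cover: "R \<subseteq> (\<Union>n::nat. closure (A n))"
  shows "\<exists>n y0 r. r > 0 \<and> y0 \<in> R \<and> R \<inter> ball y0 r \<subseteq> closure (A n)"
proof (rule ccontr)
  assume neg: "\<not> ?thesis"
  define X where "X = top_of_set R"
  define \<G> where "\<G> = range (\<lambda>n::nat. R \<inter> closure (A n))"
  have "X interior_of \<Union>\<G> = {}"
  proof (rule Baire_category_alt)
    show "completely_metrizable_space X \<or> locally_compact_space X \<and> regular_space X"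
      unfolding X_def using R(1)[unfolded closed_closedin]
      by (simp add: completely_metrizable_space_closedin completely_metrizable_space_euclidean)
    show "countable \<G>" unfolding \<G>_def by simp
    fix S assume "S \<in> \<G>"
    then obtain n where n: "S = R \<inter> closure (A n)" unfolding \<G>_def by blast
    show "closedin X S \<and> X interior_of S = {}"
    proof
      show "closedin X S" unfolding X_def n by (simp add: closedin_closed_Int)
      show "X interior_of S = {}"
      proof (rule equals0I)
        fix y0 assume "y0 \<in> X interior_of S"
        then obtain U where U: "openin X U" "y0 \<in> U" "U \<subseteq> S" unfolding interior_of_def by blast
        from U(1) obtain V where V: "open V" "U = R \<inter> V" unfolding X_def openin_open by blast
        from V U(2) obtain r where "r > 0" "ball y0 r \<subseteq> V" using open_contains_ball by blast
        moreover have "y0 \<in> R" using U(2) V by blast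
        moreover have "R \<inter> ball y0 r \<subseteq> closure (A n)" using calculation U(3) V n by blast
        ultimately show False using neg by blast
      qed
    qed
  qed
  moreover have "\<Union>\<G> = R" unfolding \<G>_def using cover by blast
  moreover have "X interior_of R = R"
    using interior_of_topspace[of X] unfolding X_def by simp
  ultimately show False using R(2) by simp
qed

lemma baire_closure_image_cball:
  fixes T :: "'a::banach \<Rightarrow> 'b::banach"
  assumes T: "bounded_linear T" and G: "subspace G" and R: "closed (T ` G)"
  shows "\<exists>n::nat. \<exists>y0 r. r > 0 \<and> y0 \<in> T ` G \<and> T ` G \<inter> ball y0 r \<subseteq> closure (T ` (G \<inter> cball 0 (real n)))"
proof (rule baire_closed_subset_cover[OF R])
  have "T 0 \<in> T ` G" using subspace_0[OF G] by (rule imageI)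
  then show "T ` G \<noteq> {}" by blast
  show "T ` G \<subseteq> (\<Union>n::nat. closure (T ` (G \<inter> cball 0 (real n))))"
  proof
    fix y assume "y \<in> T ` G"
    then obtain x where x: "x \<in> G" "y = T x" by blast
    obtain n :: nat where "norm x \<le> real n" using real_arch_simple by blast
    then have "y \<in> closure (T ` (G \<inter> cball 0 (real n)))" using x closure_subset by fastforce
    then show "y \<in> (\<Union>n::nat. closure (T ` (G \<inter> cball 0 (real n))))" by (rule UN_I[rotated]) simp
  qed
qed

text \<open>A point y of the range near 0 is the difference of two points near y0 + y and y0,
  both of which are approximated by images of the ball of radius c.\<close>
lemma approximate_bounded_preimage_near_zero:
  fixes T :: "'a::real_normed_vector \<Rightarrow> 'b::real_normed_vector"
  assumes lin: "linear T" and G: "subspace G" and y0: "y0 \<in> T ` G"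
    and sub: "T ` G \<inter> ball y0 r \<subseteq> closure (T ` (G \<inter> cball 0 c))"
    and y: "y \<in> T ` G" "norm y < r" and e: "e > 0"
  shows "\<exists>x\<in>G. norm x \<le> 2 * c \<and> norm (y - T x) < e"
proof -
  have "y0 + y \<in> T ` G" using linear_subspace_image[OF lin G] y0 y subspace_add by blast
  moreover have "y0 + y \<in> ball y0 r" using y by (simp add: dist_norm)
  ultimately have "y0 + y \<in> closure (T ` (G \<inter> cball 0 c))" using sub by blast
  then obtain z1 where z1: "z1 \<in> T ` (G \<inter> cball 0 c)" "dist z1 (y0 + y) < e/2"
    using e closure_approachable[of "y0 + y"] by (meson half_gt_zero)
  then obtain x1 where x1: "x1 \<in> G" "norm x1 \<le> c" "dist (T x1) (y0 + y) < e/2" by auto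
  have "r > 0" using y(2) norm_ge_zero[of y] by linarith
  then have "y0 \<in> closure (T ` (G \<inter> cball 0 c))" using sub y0 by auto
  then obtain z2 where z2: "z2 \<in> T ` (G \<inter> cball 0 c)" "dist z2 y0 < e/2"
    using e closure_approachable[of y0] by (meson half_gt_zero)
  then obtain x2 where x2: "x2 \<in> G" "norm x2 \<le> c" "dist (T x2) y0 < e/2" by auto
  have "y - T (x1 - x2) = ((y0 + y) - T x1) - (y0 - T x2)"
    using linear_diff[OF lin] by (simp add: algebra_simps)
  then have "norm (y - T (x1 - x2)) \<le> norm ((y0 + y) - T x1) + norm (y0 - T x2)"
    using norm_triangle_ineq4[of "(y0 + y) - T x1" "y0 - T x2"] by (simp only:)
  also have "\<dots> < e/2 + e/2" using x1(3) x2(3)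
    by (intro add_strict_mono) (auto simp: dist_norm norm_minus_commute)
  finally have "norm (y - T (x1 - x2)) < e" by simp
  moreover have "x1 - x2 \<in> G" using G x1 x2 subspace_diff by blast
  moreover have "norm (x1 - x2) \<le> 2 * c" using norm_triangle_ineq4[of x1 x2] x1 x2 by simp
  ultimately show ?thesis by blast
qed

lemma approximate_bounded_preimage:
  fixes T :: "'a::banach \<Rightarrow> 'b::banach"
  assumes T: "bounded_linear T" and G: "subspace G" and R: "closed (T ` G)"
  shows "\<exists>M\<ge>0. \<forall>y\<in>T ` G. \<forall>e>0. \<exists>x\<in>G. norm x \<le> M * norm y \<and> norm (y - T x) < e"
proof -
  obtain n :: nat and y0 r where r: "r > 0" and y0: "y0 \<in> T ` G"
    and sub: "T ` G \<inter> ball y0 r \<subseteq> closure (T ` (G \<inter> cball 0 (real n)))"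
    using baire_closure_image_cball[OF assms] by blast
  have lin: "linear T" using T bounded_linear.linear by blast
  define M where "M = 4 * real n / r"
  have "\<exists>x\<in>G. norm x \<le> M * norm y \<and> norm (y - T x) < e"
    if y: "y \<in> T ` G" and e: "e > 0" for y e
  proof (cases "y = 0")
    case True
    then show ?thesis using e G subspace_0 linear_0[OF lin] by (intro bexI[of _ 0]) auto
  next
    case False
    define l where "l = r / (2 * norm y)"
    have l: "l > 0" unfolding l_def using r False by simp
    have "l *\<^sub>R y \<in> T ` G" using linear_subspace_image[OF lin G] y subspace_scale by blast
    moreover have "norm (l *\<^sub>R y) < r" using l r False by (simp add: l_def)
    ultimately obtain x' where x': "x' \<in> G" "norm x' \<le> 2 * real n" "norm (l *\<^sub>R y - T x') < l * e"
      using approximate_bounded_preimage_near_zero[OF lin G y0 sub] l e by (meson mult_pos_pos)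
    have "(1/l) *\<^sub>R x' \<in> G" using G x'(1) subspace_scale by blast
    moreover have "norm ((1/l) *\<^sub>R x') \<le> M * norm y"
    proof -
      have "norm ((1/l) *\<^sub>R x') \<le> 2 * real n / l" using x'(2) l by (simp add: divide_right_mono)
      also have "\<dots> = M * norm y" unfolding M_def l_def using False r by (simp add: field_simps)
      finally show ?thesis .
    qed
    moreover have "norm (y - T ((1/l) *\<^sub>R x')) < e"
    proof -
      have "y - T ((1/l) *\<^sub>R x') = (1/l) *\<^sub>R (l *\<^sub>R y - T x')"
        using l linear_scale[OF lin] by (simp add: algebra_simps)
      then have "norm (y - T ((1/l) *\<^sub>R x')) = norm (l *\<^sub>R y - T x') / l" using l by simp
      also have "\<dots> < e" using x'(3) l by (simp add: field_simps)
      finally show ?thesis .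
    qed
    ultimately show ?thesis by blast
  qed
  moreover have "M \<ge> 0" unfolding M_def using r by simp
  ultimately show ?thesis by blast
qed

lemma approximate_preimage_series:
  fixes T :: "'a::real_normed_vector \<Rightarrow> 'b::real_normed_vector"
  assumes lin: "linear T" and G: "subspace G" and M: "M \<ge> 0"
    and apx: "\<And>y e. y \<in> T ` G \<Longrightarrow> e > 0 \<Longrightarrow> \<exists>x\<in>G. norm x \<le> M * norm y \<and> norm (y - T x) < e"
    and y: "y \<in> T ` G" "y \<noteq> 0"
  obtains xs where "\<And>k. xs k \<in> G" "\<And>k. norm (xs k) \<le> M * norm y * (1/2)^k"
    "(\<lambda>n. T (\<Sum>k<n. xs k)) \<longlonglongrightarrow> y"
proof -
  define e where "e k = norm y * (1/2)^(k+1)" for k :: nat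
  have epos: "e k > 0" for k unfolding e_def using y(2) by simp
  define pick where "pick w k = (SOME x. x \<in> G \<and> norm x \<le> M * norm w \<and> norm (w - T x) < e k)" for w k
  have pick: "pick w k \<in> G \<and> norm (pick w k) \<le> M * norm w \<and> norm (w - T (pick w k)) < e k"
    if "w \<in> T ` G" for w k
  proof -
    have "\<exists>x. x \<in> G \<and> norm x \<le> M * norm w \<and> norm (w - T x) < e k"
      using apx[OF that epos[of k]] by blast
    then show ?thesis unfolding pick_def by (rule someI_ex)
  qed
  define ys where "ys = rec_nat y (\<lambda>k w. w - T (pick w k))"
  have ys0: "ys 0 = y" and ysS: "ys (Suc k) = ys k - T (pick (ys k) k)" for k
    by (simp_all add: ys_def)
  have inv: "ys k \<in> T ` G \<and> norm (ys k) \<le> norm y * (1/2)^k" for k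
  proof (induction k)
    case 0 then show ?case using y by (simp add: ys0)
  next
    case (Suc k)
    have p: "pick (ys k) k \<in> G" "norm (ys k - T (pick (ys k) k)) < e k"
      using pick[of "ys k" k] Suc by auto
    have "T (pick (ys k) k) \<in> T ` G" using p(1) by blast
    then have "ys (Suc k) \<in> T ` G"
      using linear_subspace_image[OF lin G] Suc subspace_diff ysS by metis
    moreover have "norm (ys (Suc k)) \<le> norm y * (1/2)^(Suc k)"
      using p(2) by (simp add: ysS e_def)
    ultimately show ?case by blast
  qed
  define xs where "xs k = pick (ys k) k" for k
  show ?thesis
  proof (rule that[of xs])
    show "xs k \<in> G" for k using pick[of "ys k" k] inv[of k] unfolding xs_def by blast
    show "norm (xs k) \<le> M * norm y * (1/2)^k" for k
    proof -
      have "norm (xs k) \<le> M * norm (ys k)" using pick[of "ys k" k] inv[of k] unfolding xs_def by blast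
      also have "\<dots> \<le> M * (norm y * (1/2)^k)" using inv[of k] M by (intro mult_left_mono) auto
      finally show ?thesis by simp
    qed
    have "T (\<Sum>k<n. xs k) = y - ys n" for n
      using sum_lessThan_telescope'[of ys n]
      by (simp add: linear_sum[OF lin] xs_def ysS ys0)
    moreover have "ys \<longlonglongrightarrow> 0"
    proof (rule Lim_null_comparison)
      show "\<forall>\<^sub>F k in sequentially. norm (ys k) \<le> norm y * (1/2)^k" using inv by simp
      show "(\<lambda>k. norm y * (1/2::real)^k) \<longlonglongrightarrow> 0"
        by (intro tendsto_mult_right_zero LIMSEQ_realpow_zero) auto
    qed
    ultimately show "(\<lambda>n. T (\<Sum>k<n. xs k)) \<longlonglongrightarrow> y"
      using tendsto_diff[OF tendsto_const[of y], of ys 0] by simp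
  qed
qed

lemma bounded_preimage_if_approximate:
  fixes T :: "'a::banach \<Rightarrow> 'b::real_normed_vector"
  assumes T: "bounded_linear T" and G: "subspace G" "closed G" and M: "M \<ge> 0"
    and apx: "\<And>y e. y \<in> T ` G \<Longrightarrow> e > 0 \<Longrightarrow> \<exists>x\<in>G. norm x \<le> M * norm y \<and> norm (y - T x) < e"
    and y: "y \<in> T ` G"
  shows "\<exists>x\<in>G. T x = y \<and> norm x \<le> 2 * M * norm y"
proof (cases "y = 0")
  case True
  then show ?thesis using G subspace_0 linear_0[OF bounded_linear.linear[OF T]] by (intro bexI[of _ 0]) auto
next
  case False
  obtain xs where xsG: "\<And>k. xs k \<in> G" and xsn: "\<And>k. norm (xs k) \<le> M * norm y * (1/2)^k"
    and lim: "(\<lambda>n. T (\<Sum>k<n. xs k)) \<longlonglongrightarrow> y"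
    using approximate_preimage_series[OF bounded_linear.linear[OF T] G(1) M apx y False] by blast
  have sg: "summable (\<lambda>k. M * norm y * (1/2::real)^k)"
    by (intro summable_mult summable_geometric) simp
  have "xs sums suminf xs"
    by (rule summable_sums, rule summable_comparison_test[OF _ sg]) (use xsn in auto)
  then have partial: "(\<lambda>n. \<Sum>k<n. xs k) \<longlonglongrightarrow> suminf xs" by (simp add: sums_def)
  have "(\<Sum>k<n. xs k) \<in> G" for n using G(1) xsG by (simp add: subspace_sum)
  then have "suminf xs \<in> G" using closed_sequentially[OF G(2) _ partial] by blast
  moreover have "T (suminf xs) = y"
    using LIMSEQ_unique[OF bounded_linear.tendsto[OF T partial] lim] .
  moreover have "norm (suminf xs) \<le> 2 * M * norm y"
  proof -
    have "norm (suminf xs) \<le> (\<Sum>k. M * norm y * (1/2::real)^k)"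
      by (rule norm_suminf_le[OF xsn sg])
    also have "\<dots> = M * norm y * (\<Sum>k. (1/2::real)^k)"
      using summable_geometric[of "1/2::real"] by (intro suminf_mult) simp
    also have "(\<Sum>k. (1/2::real)^k) = 2" using suminf_geometric[of "1/2::real"] by simp
    finally show ?thesis by simp
  qed
  ultimately show ?thesis by blast
qed

lemma bounded_preimage_if_closed_range:
  fixes T :: "'a::banach \<Rightarrow> 'b::banach"
  assumes T: "bounded_linear T" and G: "subspace G" "closed G" and R: "closed (T ` G)"
  shows "\<exists>C>0. \<forall>y\<in>T ` G. \<exists>x\<in>G. T x = y \<and> norm x \<le> C * norm y"
proof -
  obtain M where M: "M \<ge> 0"
    and apx: "\<And>y e. y \<in> T ` G \<Longrightarrow> e > 0 \<Longrightarrow> \<exists>x\<in>G. norm x \<le> M * norm y \<and> norm (y - T x) < e"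
    using approximate_bounded_preimage[OF T G(1) R] by blast
  have "\<exists>x\<in>G. T x = y \<and> norm x \<le> (2 * M + 1) * norm y" if y: "y \<in> T ` G" for y
  proof -
    obtain x where x: "x \<in> G" "T x = y" "norm x \<le> 2 * M * norm y"
      using bounded_preimage_if_approximate[OF T G M apx y] by blast
    moreover have "2 * M * norm y \<le> (2 * M + 1) * norm y" by (simp add: mult_right_mono)
    ultimately show ?thesis by (intro bexI[of _ x]) auto
  qed
  then show ?thesis using M by (intro exI[of _ "2 * M + 1"]) auto
qed

text \<open>Among d + 1 approximants in a d-dimensional space there is a linear relation whose
  largest coefficient is 1; disjointness lets this coefficient dominate the whole combination.\<close>
lemma disjoint_seq_not_near_finite_span:
  assumes v: "disjoint_seq v" and B: "finite B" "\<And>n. w n \<in> span B"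
    and near: "(\<lambda>n. norm (v n - w n)) \<longlonglongrightarrow> 0"
    and \<delta>: "\<delta> > 0" "eventually (\<lambda>n. \<delta> \<le> norm (v n)) sequentially"
  shows False
proof -
  define d where "d = card B"
  define \<epsilon> where "\<epsilon> = \<delta> / (2 * (real d + 1))"
  have "\<epsilon> > 0" unfolding \<epsilon>_def using \<delta>(1) by simp
  then have "eventually (\<lambda>n. norm (v n - w n) < \<epsilon> \<and> \<delta> \<le> norm (v n)) sequentially"
    using order_tendstoD(2)[OF near] \<delta>(2) eventually_conj by blast
  then obtain N where N: "\<And>n. N \<le> n \<Longrightarrow> norm (v n - w n) < \<epsilon> \<and> \<delta> \<le> norm (v n)"
    unfolding eventually_sequentially by blast
  define I where "I = {N..N+d}"
  have I: "finite I" "card B < card I" unfolding I_def d_def by simp_all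
  obtain j c where j: "j \<in> I" "c j = 1" and c: "\<And>k. k \<in> I \<Longrightarrow> \<bar>c k\<bar> \<le> 1"
    and rel: "(\<Sum>k\<in>I. c k *\<^sub>R w k) = 0"
    using normalized_nontrivial_combination_in_small_span[of B I w, OF B(1) I B(2)] by blast
  have "norm (v j) \<le> norm (\<Sum>k\<in>I. c k *\<^sub>R v k)"
    using norm_term_le_norm_disjoint_seq_sum[OF v I(1) j(1), of c] j(2) by simp
  also have "(\<Sum>k\<in>I. c k *\<^sub>R v k) = (\<Sum>k\<in>I. c k *\<^sub>R (v k - w k))"
    using rel by (simp add: sum_subtractf scaleR_diff_right)
  also have "norm \<dots> \<le> (\<Sum>k\<in>I. \<epsilon>)"
  proof (rule order_trans[OF norm_sum sum_mono])
    fix k assume k: "k \<in> I"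
    then have "norm (v k - w k) < \<epsilon>" using N unfolding I_def by simp
    then show "norm (c k *\<^sub>R (v k - w k)) \<le> \<epsilon>"
    proof -
      have "\<bar>c k\<bar> * norm (v k - w k) \<le> 1 * \<epsilon>"
        using c[OF k] \<open>norm (v k - w k) < \<epsilon>\<close> by (intro mult_mono) auto
      then show ?thesis by simp
    qed
  qed
  also have "\<dots> = \<delta> / 2" unfolding \<epsilon>_def I_def by (simp add: field_simps)
  finally show False using N[of j] j(1) \<delta>(1) unfolding I_def by simp
qed

lemma not_upper_semi_fredholm_on_if_almost_disjoint_null:
  fixes S :: "'a::banach_lattice \<Rightarrow> 'b::banach"
  assumes S: "bounded_linear S" and G: "closed_subspace G" and u: "almost_disjoint_in G u"
    and Su: "(\<lambda>n. norm (S (u n))) \<longlonglongrightarrow> 0"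
  shows "\<not> upper_semi_fredholm_on S G"
proof
  assume "upper_semi_fredholm_on S G"
  then obtain B where B: "finite B" "span B = {x\<in>G. S x = 0}" and cl: "closed (S ` G)"
    unfolding upper_semi_fredholm_on_def finite_dimensional_def by blast
  have Gs: "subspace G" "closed G" using G unfolding closed_subspace_def by auto
  from u obtain v where uG: "\<And>n. u n \<in> G" and un: "\<And>n. norm (u n) = 1" and v: "disjoint_seq v"
    and vu: "(\<lambda>n. norm (v n - u n)) \<longlonglongrightarrow> 0"
    unfolding almost_disjoint_in_def by blast
  obtain C where C: "\<And>y. y \<in> S ` G \<Longrightarrow> \<exists>x\<in>G. S x = y \<and> norm x \<le> C * norm y"
    using bounded_preimage_if_closed_range[OF S Gs cl] by blast
  have "\<forall>n. \<exists>z. z \<in> G \<and> S z = S (u n) \<and> norm z \<le> C * norm (S (u n))"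
    using C uG by blast
  then obtain z where "\<forall>n. z n \<in> G \<and> S (z n) = S (u n) \<and> norm (z n) \<le> C * norm (S (u n))"
    by (rule choice[THEN exE])
  then have z: "\<And>n. z n \<in> G" "\<And>n. S (z n) = S (u n)" "\<And>n. norm (z n) \<le> C * norm (S (u n))"
    by auto
  have ker: "u n - z n \<in> span B" for n
  proof -
    have "S (u n - z n) = 0" using z(2) linear_diff[OF bounded_linear.linear[OF S]] by simp
    then show ?thesis using B(2) subspace_diff[OF Gs(1) uG z(1)] by blast
  qed
  have bound: "norm (v n - (u n - z n)) \<le> norm (v n - u n) + C * norm (S (u n))" for n
  proof -
    have "v n - (u n - z n) = (v n - u n) + z n" by simp
    then have "norm (v n - (u n - z n)) \<le> norm (v n - u n) + norm (z n)"
      using norm_triangle_ineq[of "v n - u n" "z n"] by (simp only:)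
    then show ?thesis using z(3)[of n] by simp
  qed
  have near: "(\<lambda>n. norm (v n - (u n - z n))) \<longlonglongrightarrow> 0"
  proof (rule Lim_null_comparison)
    show "\<forall>\<^sub>F n in sequentially. norm (norm (v n - (u n - z n))) \<le> norm (v n - u n) + C * norm (S (u n))"
      using bound by simp
    show "(\<lambda>n. norm (v n - u n) + C * norm (S (u n))) \<longlonglongrightarrow> 0"
      using tendsto_add[OF vu tendsto_mult_right_zero[OF Su]] by simp
  qed
  have "eventually (\<lambda>n. norm (v n - u n) < 1/2) sequentially"
    using order_tendstoD(2)[OF vu, of "1/2"] by (simp only: norm_zero)
  then have "eventually (\<lambda>n. 1/2 \<le> norm (v n)) sequentially"
  proof (rule eventually_mono)
    fix n assume "norm (v n - u n) < 1/2"
    then show "1/2 \<le> norm (v n)" using norm_triangle_ineq4[of "v n" "v n - u n"] un[of n] by simp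
  qed
  then show False by (rule disjoint_seq_not_near_finite_span[OF v B(1) ker near, rotated]) simp
qed

section \<open>The gliding hump\<close>

lemma span_range_split:
  fixes f :: "nat \<Rightarrow> 'a::real_vector" and N :: nat
  assumes "v \<in> span (range f)"
  shows "\<exists>w t. w \<in> span (f ` {..<N}) \<and> t \<in> span (f ` {N..}) \<and> v = w + t"
proof -
  obtain A a where A: "finite A" "A \<subseteq> UNIV" "v = (\<Sum>n\<in>A. a n *\<^sub>R f n)"
    by (rule span_imageE[of v f UNIV]) (use assms in simp)
  have "v = (\<Sum>n\<in>A \<inter> {..<N}. a n *\<^sub>R f n) + (\<Sum>n\<in>A - {..<N}. a n *\<^sub>R f n)"
    using A(1,3) by (simp add: sum.Int_Diff)
  moreover have "(\<Sum>n\<in>A \<inter> {..<N}. a n *\<^sub>R f n) \<in> span (f ` {..<N})"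
    by (intro span_sum span_scale span_base) auto
  moreover have "(\<Sum>n\<in>A - {..<N}. a n *\<^sub>R f n) \<in> span (f ` {N..})"
    by (intro span_sum span_scale span_base) auto
  ultimately show ?thesis by blast
qed
lemma closure_span_range_approx_split:
  fixes f :: "nat \<Rightarrow> 'a::real_normed_vector"
  assumes "h \<in> closure (span (range f))" "\<eta> > 0"
  shows "\<exists>w\<in>span (f ` {..<N}). \<exists>t\<in>span (f ` {N..}). norm (h - (w + t)) < \<eta>"
proof -
  obtain v where v: "v \<in> span (range f)" "dist v h < \<eta>"
    using closure_approachable[of h] assms by blast
  obtain w t where "w \<in> span (f ` {..<N})" "t \<in> span (f ` {N..})" "v = w + t"
    using span_range_split[OF v(1), of N] by blast
  then show ?thesis using v(2) by (auto simp: dist_norm norm_minus_commute)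
qed

lemma subspace_near_tail_span:
  fixes f :: "nat \<Rightarrow> 'a::real_normed_vector"
  assumes H: "subspace H" "infinite_dimensional H" "H \<subseteq> closure (span (range f))"
    and \<delta>: "\<delta> > 0"
  shows "\<exists>h\<in>H. \<exists>t\<in>span (f ` {N..}). h \<noteq> 0 \<and> norm (h - t) \<le> \<delta> * norm h"
proof -
  obtain Hs where Hs: "finite Hs" "card Hs = Suc N" "Hs \<subseteq> H" "independent Hs"
    using infinite_dimensional_independent_subset[OF H(1,2), of "Suc N"] by blast
  obtain m where m: "m > 0" "\<And>u. m * (\<Sum>b\<in>Hs. \<bar>u b\<bar>) \<le> norm (\<Sum>b\<in>Hs. u b *\<^sub>R b)"
    using independent_coefficient_bound[OF Hs(1,4)] by blast
  define \<eta> where "\<eta> = m * \<delta>"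
  have "\<eta> > 0" unfolding \<eta>_def using m \<delta> by simp
  have "\<forall>h\<in>Hs. \<exists>w. w \<in> span (f ` {..<N}) \<and> (\<exists>t. t \<in> span (f ` {N..}) \<and> norm (h - (w + t)) < \<eta>)"
    using closure_span_range_approx_split[OF _ \<open>\<eta> > 0\<close>] Hs(3) H(3) by blast
  then obtain ww where "\<forall>h\<in>Hs. ww h \<in> span (f ` {..<N}) \<and>
      (\<exists>t. t \<in> span (f ` {N..}) \<and> norm (h - (ww h + t)) < \<eta>)"
    by (rule bchoice[THEN exE])
  then have "\<forall>h\<in>Hs. \<exists>t. ww h \<in> span (f ` {..<N}) \<and> t \<in> span (f ` {N..}) \<and> norm (h - (ww h + t)) < \<eta>"
    by blast
  then obtain tt where approx: "\<And>h. h \<in> Hs \<Longrightarrow> ww h \<in> span (f ` {..<N}) \<and> tt h \<in> span (f ` {N..}) \<and>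
      norm (h - (ww h + tt h)) < \<eta>"
    by (metis bchoice)
  text \<open>More vectors than the dimension of the head space: a combination cancels all heads.\<close>
  have "card (f ` {..<N}) < card Hs" using Hs(2) card_image_le[of "{..<N}" f] by simp
  then obtain c where c: "\<exists>h\<in>Hs. c h \<noteq> 0" "(\<Sum>h\<in>Hs. c h *\<^sub>R ww h) = 0"
    using nontrivial_combination_in_small_span[of "f ` {..<N}" Hs ww] Hs(1) approx by blast
  define hs where "hs = (\<Sum>h\<in>Hs. c h *\<^sub>R h)"
  define ts where "ts = (\<Sum>h\<in>Hs. c h *\<^sub>R tt h)"
  define sc where "sc = (\<Sum>h\<in>Hs. \<bar>c h\<bar>)"
  have "sc > 0"
  proof -
    obtain h where "h \<in> Hs" "c h \<noteq> 0" using c(1) by blast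
    then have "\<bar>c h\<bar> \<le> sc" unfolding sc_def using Hs(1) by (intro member_le_sum) auto
    then show ?thesis using \<open>c h \<noteq> 0\<close> by simp
  qed
  have hs_lower: "m * sc \<le> norm hs" unfolding hs_def sc_def by (rule m(2))
  have "hs - ts = (\<Sum>h\<in>Hs. c h *\<^sub>R (h - (ww h + tt h)))"
    using c(2) unfolding hs_def ts_def
    by (simp add: sum_subtractf scaleR_diff_right scaleR_add_right sum.distrib)
  then have "norm (hs - ts) \<le> (\<Sum>h\<in>Hs. norm (c h *\<^sub>R (h - (ww h + tt h))))"
    by (simp only: norm_sum)
  also have "\<dots> \<le> (\<Sum>h\<in>Hs. \<bar>c h\<bar> * \<eta>)"
  proof (rule sum_mono)
    fix h assume "h \<in> Hs"
    then show "norm (c h *\<^sub>R (h - (ww h + tt h))) \<le> \<bar>c h\<bar> * \<eta>"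
      using approx[of h] by (simp add: mult_left_mono)
  qed
  also have "\<dots> = \<delta> * (m * sc)" unfolding sc_def \<eta>_def by (simp add: sum_distrib_right sum_distrib_left ac_simps)
  also have "\<dots> \<le> \<delta> * norm hs" using hs_lower \<delta> by simp
  finally have "norm (hs - ts) \<le> \<delta> * norm hs" .
  moreover have "hs \<in> H" unfolding hs_def using H(1) Hs(3) by (intro subspace_sum subspace_scale) auto
  moreover have "ts \<in> span (f ` {N..})" unfolding ts_def using approx by (simp add: span_sum span_scale)
  moreover have "hs \<noteq> 0"
  proof -
    have "0 < m * sc" using m(1) \<open>sc > 0\<close> by simp
    then show ?thesis using hs_lower by auto
  qed
  ultimately show ?thesis by blast
qed

lemma disjoint_if_between_strict_mono:
  assumes mono: "strict_mono Ns" and between: "\<And>k n. n \<in> As k \<Longrightarrow> Ns k \<le> n \<and> n < Ns (Suc k)"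
    and "k \<noteq> j"
  shows "As k \<inter> As j = {}"
proof -
  have "As k \<inter> As j = {}" if "k < j" for k j
  proof -
    have "Ns (Suc k) \<le> Ns j" using that mono by (simp add: strict_mono_less_eq)
    then show ?thesis using between[of _ k] between[of _ j] by fastforce
  qed
  then show ?thesis using \<open>k \<noteq> j\<close> by (metis inf_commute linorder_neqE_nat)
qed

lemma disjoint_blocks_choice:
  fixes P :: "nat \<Rightarrow> nat set \<Rightarrow> 'z \<Rightarrow> bool"
  assumes "\<And>N k. \<exists>A z. finite A \<and> A \<subseteq> {N..} \<and> P k A z"
  obtains As zs where "\<And>k. finite (As k)" "\<And>k. As k \<subseteq> {k..}" "\<And>k. P k (As k) (zs k)"
    "\<And>k j. k \<noteq> j \<Longrightarrow> As k \<inter> As j = {}"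
proof -
  define ch where "ch N k = (SOME p. finite (fst p) \<and> fst p \<subseteq> {N..} \<and> P k (fst p) (snd p))" for N k
  have ch: "finite (fst (ch N k)) \<and> fst (ch N k) \<subseteq> {N..} \<and> P k (fst (ch N k)) (snd (ch N k))" for N k
  proof -
    from assms[of N k] obtain A z where "finite A \<and> A \<subseteq> {N..} \<and> P k A z" by (elim exE)
    then have "\<exists>p. finite (fst p) \<and> fst p \<subseteq> {N..} \<and> P k (fst p) (snd p)" by (intro exI[of _ "(A, z)"]) simp
    then show ?thesis unfolding ch_def by (rule someI_ex)
  qed
  define Ns where "Ns = rec_nat 0 (\<lambda>k n. Suc (Max (insert n (fst (ch n k)))))"
  have Ns0: "Ns 0 = 0" and NsS: "Ns (Suc k) = Suc (Max (insert (Ns k) (fst (ch (Ns k) k))))" for k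
    by (simp_all add: Ns_def)
  define As where "As k = fst (ch (Ns k) k)" for k
  define zs where "zs k = snd (ch (Ns k) k)" for k
  have finA: "finite (As k)" for k using ch unfolding As_def by blast
  have Alow: "n \<in> As k \<Longrightarrow> Ns k \<le> n" for n k using ch unfolding As_def by blast
  have Ahigh: "n \<in> As k \<Longrightarrow> n < Ns (Suc k)" for n k
  proof -
    assume "n \<in> As k"
    then have "n \<le> Max (insert (Ns k) (As k))" using finA by (intro Max_ge) auto
    then show ?thesis by (simp add: NsS As_def)
  qed
  have NsSuc: "Ns k < Ns (Suc k)" for k
  proof -
    have "Ns k \<le> Max (insert (Ns k) (fst (ch (Ns k) k)))" using ch by (intro Max_ge) auto
    then show ?thesis by (simp add: NsS)
  qed
  have mono: "strict_mono Ns" using NsSuc by (simp add: strict_mono_Suc_iff)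
  show ?thesis
  proof (rule that[of As zs])
    show "finite (As k)" for k by (rule finA)
    show "As k \<subseteq> {k..}" for k using Alow seq_suble[OF mono, of k] by force
    show "P k (As k) (zs k)" for k using ch unfolding As_def zs_def by blast
    show "As k \<inter> As j = {}" if "k \<noteq> j" for k j
      using disjoint_if_between_strict_mono[OF mono _ that] Alow Ahigh by blast
  qed
qed

lemma almost_disjoint_in_subspace_closure_span:
  fixes f :: "nat \<Rightarrow> 'a::banach_lattice"
  assumes f: "disjoint_seq f"
    and H: "subspace H" "infinite_dimensional H" "H \<subseteq> closure (span (range f))"
  shows "\<exists>g. almost_disjoint_in H g"
proof -
  define P where "P k A z \<longleftrightarrow> fst z \<in> H \<and> norm (fst z) = 1 \<and>
      norm (fst z - (\<Sum>n\<in>A. snd z n *\<^sub>R f n)) \<le> (1/2::real)^k"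
    for k A and z :: "'a \<times> (nat \<Rightarrow> real)"
  have "\<exists>A z. finite A \<and> A \<subseteq> {N..} \<and> P k A z" for N k
  proof -
    obtain h t where h: "h \<in> H" "h \<noteq> 0" and t: "t \<in> span (f ` {N..})"
      and ht: "norm (h - t) \<le> (1/2)^k * norm h"
      using subspace_near_tail_span[OF H, of "(1/2)^k" N] by auto
    obtain A a where A: "finite A" "A \<subseteq> {N..}" "(1 / norm h) *\<^sub>R t = (\<Sum>n\<in>A. a n *\<^sub>R f n)"
      using span_imageE[OF span_scale[OF t, of "1 / norm h"]] by metis
    have "norm ((1 / norm h) *\<^sub>R h - (1 / norm h) *\<^sub>R t) = norm (h - t) / norm h"
      by (simp add: scaleR_diff_right[symmetric])
    also have "\<dots> \<le> (1/2)^k" using ht h(2) by (simp add: divide_le_eq)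
    finally have "P k A ((1 / norm h) *\<^sub>R h, a)"
      unfolding P_def using h H(1) A(3) by (simp add: subspace_scale)
    then show ?thesis using A(1,2) by blast
  qed
  then obtain As :: "nat \<Rightarrow> nat set" and zs :: "nat \<Rightarrow> 'a \<times> (nat \<Rightarrow> real)"
    where As: "\<And>k. finite (As k)" and P: "\<And>k. P k (As k) (zs k)"
      and D: "\<And>k j. k \<noteq> j \<Longrightarrow> As k \<inter> As j = {}"
    using disjoint_blocks_choice[of P] by metis
  define x where "x k = (\<Sum>n\<in>As k. snd (zs k) n *\<^sub>R f n)" for k
  have "almost_disjoint_in H (\<lambda>k. fst (zs k))"
    unfolding almost_disjoint_in_def
  proof (intro conjI allI exI[of _ x])
    show "fst (zs n) \<in> H" "norm (fst (zs n)) = 1" for n using P[of n] unfolding P_def by auto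
    show "disjoint_seq x" unfolding disjoint_seq_def x_def
      using ldisjoint_disjoint_seq_sums[OF f As As D] by blast
    show "(\<lambda>n. norm (x n - fst (zs n))) \<longlonglongrightarrow> 0"
    proof (rule Lim_null_comparison)
      show "\<forall>\<^sub>F n in sequentially. norm (norm (x n - fst (zs n))) \<le> (1/2)^n"
        using P unfolding P_def x_def by (simp add: norm_minus_commute)
      show "(\<lambda>n. (1/2::real)^n) \<longlonglongrightarrow> 0" by (rule LIMSEQ_realpow_zero) auto
    qed
  qed
  then show ?thesis by blast
qed

lemma anti_dispersed_closure_span_disjoint_seq:
  assumes "disjoint_seq f"
  shows "anti_dispersed (closure (span (range f)))"
  unfolding anti_dispersed_def
proof (intro conjI notI)
  show "closed_subspace (closure (span (range f)))" by (simp add: closed_subspace_closure)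
next
  assume "\<exists>H\<subseteq>closure (span (range f)). closed_subspace H \<and> infinite_dimensional H \<and> dispersed H"
  then obtain H where H: "H \<subseteq> closure (span (range f))" "subspace H" "infinite_dimensional H" "dispersed H"
    unfolding closed_subspace_def by blast
  then show False
    using almost_disjoint_in_subspace_closure_span[OF assms H(2,3,1)] unfolding dispersed_def by blast
qed

section \<open>Almost disjoint sequences on which S vanishes\<close>

lemma eventually_obtain_subseq:
  fixes P :: "nat \<Rightarrow> nat \<Rightarrow> bool"
  assumes "\<And>k. eventually (\<lambda>n. P k n) sequentially"
  obtains \<sigma> where "strict_mono \<sigma>" "\<And>k. P k (\<sigma> k)"
proof -
  have "\<forall>k. \<exists>N. \<forall>n\<ge>N. P k n" using assms by (simp add: eventually_sequentially)
  then obtain N where N: "\<And>k n. n \<ge> N k \<Longrightarrow> P k n" by metis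
  define \<sigma> where "\<sigma> = rec_nat (N 0) (\<lambda>k s. max (N (Suc k)) (Suc s))"
  have s0: "\<sigma> 0 = N 0" and sS: "\<sigma> (Suc k) = max (N (Suc k)) (Suc (\<sigma> k))" for k
    by (simp_all add: \<sigma>_def)
  have "strict_mono \<sigma>" by (simp add: strict_mono_Suc_iff sS less_max_iff_disj)
  moreover have "\<sigma> k \<ge> N k" for k by (cases k) (simp_all add: s0 sS)
  ultimately show ?thesis using N by (intro that) auto
qed
lemma almost_disjoint_in_refine:
  fixes g :: "nat \<Rightarrow> 'a::banach_lattice"
  assumes "almost_disjoint_in G g"
  obtains f' g' where "disjoint_seq f'" "\<And>n. f' n \<noteq> 0" "\<And>n. g' n \<in> G" "\<And>n. norm (g' n) = 1"
    "\<And>n. norm (f' n - g' n) \<le> (1/2)^(n+2) * norm (f' n)"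
proof -
  from assms obtain f where g: "\<And>n. g n \<in> G" "\<And>n. norm (g n) = 1" and f: "disjoint_seq f"
    and lim: "(\<lambda>n. norm (f n - g n)) \<longlonglongrightarrow> 0"
    unfolding almost_disjoint_in_def by blast
  have ev: "eventually (\<lambda>n. norm (f n - g n) \<le> (1/2)^(k+2) * norm (f n)) sequentially" for k
  proof -
    have "(1/2::real)^(k+2) > 0" by simp
    then have "eventually (\<lambda>n. norm (f n - g n) < (1/2)^(k+3)) sequentially"
      using order_tendstoD(2)[OF lim] by simp
    then show ?thesis
    proof (rule eventually_mono)
      fix n assume n: "norm (f n - g n) < (1/2::real)^(k+3)"
      have "(1/2::real)^(k+3) \<le> 1/2" using power_decreasing[of 1 "k+3" "1/2::real"] by simp
      then have small: "norm (f n - g n) < 1/2" using n by linarith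
      have "1 = norm (g n)" using g by simp
      also have "\<dots> \<le> norm (f n) + norm (f n - g n)"
        using norm_triangle_ineq4[of "f n" "f n - g n"] by simp
      finally have "norm (f n) \<ge> 1/2" using small by simp
      then have "(1/2::real)^(k+2) * (1/2) \<le> (1/2)^(k+2) * norm (f n)"
        by (intro mult_left_mono) auto
      moreover have "(1/2::real)^(k+3) = (1/2)^(k+2) * (1/2)"
      proof -
        have "k + 3 = Suc (k + 2)" by simp
        then show ?thesis by (simp only: power_Suc2)
      qed
      ultimately show "norm (f n - g n) \<le> (1/2)^(k+2) * norm (f n)" using n by linarith
    qed
  qed
  obtain \<sigma> where \<sigma>: "strict_mono \<sigma>" "\<And>k. norm (f (\<sigma> k) - g (\<sigma> k)) \<le> (1/2)^(k+2) * norm (f (\<sigma> k))"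
    using eventually_obtain_subseq[of "\<lambda>k n. norm (f n - g n) \<le> (1/2)^(k+2) * norm (f n)", OF ev] by blast
  have inj: "inj \<sigma>" using \<sigma>(1) strict_mono_imp_inj_on by blast
  show ?thesis
  proof (rule that[of "f \<circ> \<sigma>" "g \<circ> \<sigma>"])
    show "disjoint_seq (f \<circ> \<sigma>)" using f inj unfolding disjoint_seq_def inj_def by auto
    show "(g \<circ> \<sigma>) n \<in> G" for n using g by simp
    show "norm ((g \<circ> \<sigma>) n) = 1" for n using g by simp
    show nb: "norm ((f \<circ> \<sigma>) n - (g \<circ> \<sigma>) n) \<le> (1/2)^(n+2) * norm ((f \<circ> \<sigma>) n)" for n
      using \<sigma>(2) by simp
    show "(f \<circ> \<sigma>) n \<noteq> 0" for n
    proof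
      assume "(f \<circ> \<sigma>) n = 0"
      then have "norm (g (\<sigma> n)) \<le> 0" using nb[of n] by simp
      then show False using g(2) by simp
    qed
  qed
qed
lemma sum_half_powers_le:
  assumes "finite A" "A \<subseteq> {N..}"
  shows "(\<Sum>n\<in>A. (1/2::real)^(n+1)) \<le> (1/2)^N"
proof -
  have eq: "(\<Sum>n\<in>{N..<N+k}. (1/2::real)^(n+1)) = (1/2)^N - (1/2)^(N+k)" for k
  proof (induction k)
    case 0 then show ?case by simp
  next
    case (Suc k)
    have "{N..<N + Suc k} = insert (N+k) {N..<N+k}" by auto
    then have "(\<Sum>n\<in>{N..<N+Suc k}. (1/2::real)^(n+1)) = (1/2)^(N+k+1) + (\<Sum>n\<in>{N..<N+k}. (1/2::real)^(n+1))"
      by simp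
    also have "\<dots> = (1/2)^N - (1/2)^(N + Suc k)" using Suc by simp
    finally show ?case .
  qed
  obtain k where k: "A \<subseteq> {N..<N+k}"
  proof
    show "A \<subseteq> {N..<N + Suc (Max (insert N A))}"
      using assms by (auto simp: less_Suc_eq_le intro!: Max_ge le_SucI intro: trans_le_add2)
  qed
  have "(\<Sum>n\<in>A. (1/2::real)^(n+1)) \<le> (\<Sum>n\<in>{N..<N+k}. (1/2::real)^(n+1))"
    using k by (intro sum_mono2) auto
  also have "\<dots> \<le> (1/2)^N" unfolding eq by simp
  finally show ?thesis .
qed
lemma norm_disjoint_sum_perturbation_le:
  fixes f g :: "nat \<Rightarrow> 'a::banach_lattice"
  assumes f: "disjoint_seq f" and b: "\<And>n. norm (f n - g n) \<le> (1/2)^(n+2) * norm (f n)"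
    and A: "finite A" "A \<subseteq> {N..}"
  shows "norm ((\<Sum>n\<in>A. a n *\<^sub>R f n) - (\<Sum>n\<in>A. a n *\<^sub>R g n)) \<le> (1/2)^(N+1) * norm (\<Sum>n\<in>A. a n *\<^sub>R f n)"
proof -
  define X where "X = norm (\<Sum>n\<in>A. a n *\<^sub>R f n)"
  have "(\<Sum>n\<in>A. a n *\<^sub>R f n) - (\<Sum>n\<in>A. a n *\<^sub>R g n) = (\<Sum>n\<in>A. a n *\<^sub>R (f n - g n))"
    by (simp add: sum_subtractf scaleR_diff_right)
  then have "norm ((\<Sum>n\<in>A. a n *\<^sub>R f n) - (\<Sum>n\<in>A. a n *\<^sub>R g n)) \<le> (\<Sum>n\<in>A. norm (a n *\<^sub>R (f n - g n)))"
    by (simp only: norm_sum)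
  also have "\<dots> \<le> (\<Sum>n\<in>A. (1/2)^(n+2) * X)"
  proof (rule sum_mono)
    fix n assume n: "n \<in> A"
    have "norm (a n *\<^sub>R (f n - g n)) = \<bar>a n\<bar> * norm (f n - g n)" by simp
    also have "\<dots> \<le> \<bar>a n\<bar> * ((1/2)^(n+2) * norm (f n))" by (intro mult_left_mono b) auto
    also have "\<dots> = (1/2)^(n+2) * norm (a n *\<^sub>R f n)" by simp
    also have "\<dots> \<le> (1/2)^(n+2) * X" unfolding X_def
      by (intro mult_left_mono norm_term_le_norm_disjoint_seq_sum[OF f A(1) n]) auto
    finally show "norm (a n *\<^sub>R (f n - g n)) \<le> (1/2)^(n+2) * X" .
  qed
  also have "\<dots> = (1/2) * (\<Sum>n\<in>A. (1/2::real)^(n+1)) * X"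
    by (simp add: sum_distrib_left sum_distrib_right mult.assoc)
  also have "\<dots> \<le> (1/2) * (1/2)^N * X"
    using sum_half_powers_le[OF A] unfolding X_def by (intro mult_right_mono) auto
  also have "\<dots> = (1/2)^(N+1) * X" by simp
  finally show ?thesis unfolding X_def .
qed

lemma range_shift_eq_image_atLeast: "range (\<lambda>n. f (n + (N::nat))) = f ` {N..}"
proof
  show "range (\<lambda>n. f (n + N)) \<subseteq> f ` {N..}"
  proof
    fix y assume "y \<in> range (\<lambda>n. f (n + N))"
    then obtain n where "y = f (n + N)" by blast
    moreover have "n + N \<in> {N..}" by simp
    ultimately show "y \<in> f ` {N..}" by blast
  qed
  show "f ` {N..} \<subseteq> range (\<lambda>n. f (n + N))"
  proof
    fix y assume "y \<in> f ` {N..}"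
    then obtain m where m: "m \<ge> N" "y = f m" by auto
    then have "y = f ((m - N) + N)" by simp
    then show "y \<in> range (\<lambda>n. f (n + N))" by (rule range_eqI)
  qed
qed
lemma disjoint_tail_block_nearly_annihilated:
  fixes S :: "'a::banach_lattice \<Rightarrow> 'b::real_normed_vector"
  assumes S: "bounded_linear S" and f: "disjoint_seq f" "\<And>n. f n \<noteq> 0" and \<epsilon>: "\<epsilon> > 0"
    and nbb: "\<And>f. (\<forall>n. f n \<noteq> 0) \<Longrightarrow> disjoint_seq f \<Longrightarrow> \<not> bounded_below_on S (closure (span (range f)))"
  shows "\<exists>A a. finite A \<and> A \<subseteq> {N..} \<and> (\<Sum>n\<in>A. a n *\<^sub>R f n) \<noteq> 0 \<and>
      norm (S (\<Sum>n\<in>A. a n *\<^sub>R f n)) < \<epsilon> * norm (\<Sum>n\<in>A. a n *\<^sub>R f n)"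
proof -
  have "disjoint_seq (\<lambda>n. f (n + N))" using f(1) unfolding disjoint_seq_def by simp
  then have "\<not> bounded_below_on S (closure (span (f ` {N..})))"
    using nbb[of "\<lambda>n. f (n + N)"] f(2) unfolding range_shift_eq_image_atLeast by simp
  then have "\<not> bounded_below_on S (span (f ` {N..}))"
    using bounded_below_on_closure[OF S] by blast
  then obtain x where x: "x \<in> span (f ` {N..})" "norm (S x) < \<epsilon> * norm x"
    using \<epsilon> unfolding bounded_below_on_def by (auto simp: not_le)
  obtain A a where "finite A" "A \<subseteq> {N..}" "x = (\<Sum>n\<in>A. a n *\<^sub>R f n)"
    using span_imageE[OF x(1)] by metis
  moreover have "x \<noteq> 0" using x(2) by auto
  ultimately show ?thesis using x(2) by blast
qed

lemma almost_disjoint_in_normalize: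
  fixes x y :: "nat \<Rightarrow> 'a::banach_lattice"
  assumes G: "subspace G" and y: "\<And>k. y k \<in> G" "\<And>k. y k \<noteq> 0" and x: "disjoint_seq x"
    and near: "\<And>k. norm (x k - y k) \<le> \<delta> k * norm (y k)" and \<delta>: "\<delta> \<longlonglongrightarrow> 0"
  shows "almost_disjoint_in G (\<lambda>k. (1 / norm (y k)) *\<^sub>R y k)"
  unfolding almost_disjoint_in_def
proof (intro conjI allI exI[of _ "\<lambda>k. (1 / norm (y k)) *\<^sub>R x k"])
  show "(1 / norm (y k)) *\<^sub>R y k \<in> G" for k using G y(1) by (rule subspace_scale)
  show "norm ((1 / norm (y k)) *\<^sub>R y k) = 1" for k using y(2) by simp
  show "disjoint_seq (\<lambda>k. (1 / norm (y k)) *\<^sub>R x k)" using x by (rule disjoint_seq_scaleR)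
  have "norm ((1 / norm (y k)) *\<^sub>R x k - (1 / norm (y k)) *\<^sub>R y k) \<le> \<delta> k" for k
    using near[of k] y(2)[of k] by (simp add: scaleR_diff_right[symmetric] divide_le_eq)
  then show "(\<lambda>k. norm ((1 / norm (y k)) *\<^sub>R x k - (1 / norm (y k)) *\<^sub>R y k)) \<longlonglongrightarrow> 0"
    by (intro Lim_null_comparison[OF _ \<delta>]) simp
qed

lemma disjoint_blocks_nearly_annihilated:
  fixes S :: "'a::banach_lattice \<Rightarrow> 'b::real_normed_vector"
  assumes S: "bounded_linear S" and f: "disjoint_seq f" "\<And>n. f n \<noteq> 0"
    and nbb: "\<And>f. (\<forall>n. f n \<noteq> 0) \<Longrightarrow> disjoint_seq f \<Longrightarrow> \<not> bounded_below_on S (closure (span (range f)))"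
  obtains As :: "nat \<Rightarrow> nat set" and as :: "nat \<Rightarrow> nat \<Rightarrow> real"
  where "\<And>k. finite (As k)" "\<And>k. As k \<subseteq> {k..}" "\<And>k j. k \<noteq> j \<Longrightarrow> As k \<inter> As j = {}"
    "\<And>k. (\<Sum>n\<in>As k. as k n *\<^sub>R f n) \<noteq> 0"
    "\<And>k. norm (S (\<Sum>n\<in>As k. as k n *\<^sub>R f n)) < norm (\<Sum>n\<in>As k. as k n *\<^sub>R f n) / real (Suc k)"
proof -
  define P where "P k A a \<longleftrightarrow> (\<Sum>n\<in>A. a n *\<^sub>R f n) \<noteq> 0 \<and>
      norm (S (\<Sum>n\<in>A. a n *\<^sub>R f n)) < (1 / real (Suc k)) * norm (\<Sum>n\<in>A. a n *\<^sub>R f n)"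
    for k A and a :: "nat \<Rightarrow> real"
  have "\<exists>A a. finite A \<and> A \<subseteq> {N..} \<and> P k A a" for N k
    unfolding P_def by (rule disjoint_tail_block_nearly_annihilated[OF S f _ nbb]) simp_all
  then obtain As :: "nat \<Rightarrow> nat set" and as :: "nat \<Rightarrow> nat \<Rightarrow> real"
    where As: "\<And>k. finite (As k)" "\<And>k. As k \<subseteq> {k..}" and P: "\<And>k. P k (As k) (as k)"
      and D: "\<And>k j. k \<noteq> j \<Longrightarrow> As k \<inter> As j = {}"
    using disjoint_blocks_choice[of P] by metis
  show ?thesis
  proof (rule that[OF As D])
    show "(\<Sum>n\<in>As k. as k n *\<^sub>R f n) \<noteq> 0" for k using P[of k] unfolding P_def by blast
    show "norm (S (\<Sum>n\<in>As k. as k n *\<^sub>R f n)) < norm (\<Sum>n\<in>As k. as k n *\<^sub>R f n) / real (Suc k)" for k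
      using P[of k] unfolding P_def by simp
  qed
qed

lemma norm_bounds_if_relatively_close:
  fixes x y :: "'a::real_normed_vector"
  assumes "norm (x - y) \<le> (1/2)^(k+1) * norm x"
  shows "norm x \<le> 2 * norm y" "norm (x - y) \<le> (1/2)^k * norm y"
proof -
  have "(1/2::real)^(k+1) \<le> 1/2" using power_decreasing[of 1 "k+1" "1/2::real"] by simp
  then have "(1/2)^(k+1) * norm x \<le> (1/2) * norm x" by (intro mult_right_mono) auto
  then have "norm (x - y) \<le> norm x / 2" using assms by simp
  then show le: "norm x \<le> 2 * norm y" using norm_triangle_ineq2[of x y] by simp
  have "norm (x - y) \<le> (1/2)^(k+1) * norm x" by (rule assms)
  also have "\<dots> \<le> (1/2)^(k+1) * (2 * norm y)" by (intro mult_left_mono le) simp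
  also have "\<dots> = (1/2)^k * norm y" by simp
  finally show "norm (x - y) \<le> (1/2)^k * norm y" .
qed

lemma almost_disjoint_null_if_disjoint_spans_not_bounded_below:
  fixes S :: "'a::banach_lattice \<Rightarrow> 'b::real_normed_vector"
  assumes S: "bounded_linear S" and G: "subspace G" "\<not> dispersed G"
    and nbb: "\<And>f. (\<forall>n. f n \<noteq> 0) \<Longrightarrow> disjoint_seq f \<Longrightarrow> \<not> bounded_below_on S (closure (span (range f)))"
  shows "\<exists>g. almost_disjoint_in G g \<and> (\<lambda>n. norm (S (g n))) \<longlonglongrightarrow> 0"
proof -
  obtain g0 where "almost_disjoint_in G g0" using G unfolding dispersed_def by blast
  then have "\<exists>f g. disjoint_seq f \<and> (\<forall>n. f n \<noteq> 0) \<and> (\<forall>n. g n \<in> G) \<and>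
      (\<forall>n. norm (f n - g n) \<le> (1/2)^(n+2) * norm (f n))"
    by (rule almost_disjoint_in_refine) blast
  then obtain f g where f: "disjoint_seq f" "\<And>n. f n \<noteq> 0" and g: "\<And>n. g n \<in> G"
    and fg: "\<And>n. norm (f n - g n) \<le> (1/2)^(n+2) * norm (f n)"
    by blast
  obtain As :: "nat \<Rightarrow> nat set" and as :: "nat \<Rightarrow> nat \<Rightarrow> real"
    where As: "\<And>k. finite (As k)" "\<And>k. As k \<subseteq> {k..}" and D: "\<And>k j. k \<noteq> j \<Longrightarrow> As k \<inter> As j = {}"
      and blocks: "\<And>k. (\<Sum>n\<in>As k. as k n *\<^sub>R f n) \<noteq> 0"
        "\<And>k. norm (S (\<Sum>n\<in>As k. as k n *\<^sub>R f n)) < norm (\<Sum>n\<in>As k. as k n *\<^sub>R f n) / real (Suc k)"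
    using disjoint_blocks_nearly_annihilated[OF S f nbb] by blast
  define x where "x k = (\<Sum>n\<in>As k. as k n *\<^sub>R f n)" for k
  have x: "x k \<noteq> 0" "norm (S (x k)) < norm (x k) / real (Suc k)" for k
    using blocks unfolding x_def by auto
  define y where "y k = (\<Sum>n\<in>As k. as k n *\<^sub>R g n)" for k
  have xy: "norm (x k - y k) \<le> (1/2)^(k+1) * norm (x k)" for k
    unfolding x_def y_def by (rule norm_disjoint_sum_perturbation_le[OF f(1) fg As(1) As(2)])
  note x_le_y = norm_bounds_if_relatively_close(1)[OF xy] and near = norm_bounds_if_relatively_close(2)[OF xy]
  have y: "y k \<in> G" "y k \<noteq> 0" for k
  proof -
    show "y k \<in> G" unfolding y_def using G(1) g by (intro subspace_sum subspace_scale) auto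
    show "y k \<noteq> 0" using x_le_y[of k] x(1)[of k] by auto
  qed
  obtain K where K: "K > 0" "\<And>x. norm (S x) \<le> norm x * K"
    using bounded_linear.pos_bounded[OF S] by blast
  text \<open>S is small on x k, and y k differs from x k by a relatively small vector.\<close>
  have Sy: "norm (S (y k)) \<le> (2 / real (Suc k) + K * (1/2)^k) * norm (y k)" for k
  proof -
    have "norm (S (y k)) \<le> norm (S (x k)) + norm (S (x k - y k))"
      using norm_triangle_ineq4[of "S (x k)" "S (x k - y k)"]
      by (simp add: linear_diff[OF bounded_linear.linear[OF S]])
    also have "\<dots> \<le> 2 * norm (y k) / real (Suc k) + K * ((1/2)^k * norm (y k))"
      using x(2)[of k] x_le_y[of k] K(2)[of "x k - y k"] near[of k] K(1)
      by (smt (verit) divide_right_mono mult.commute mult_left_mono of_nat_0_le_iff)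
    finally show ?thesis by (simp add: algebra_simps)
  qed
  have "almost_disjoint_in G (\<lambda>k. (1 / norm (y k)) *\<^sub>R y k)"
  proof (rule almost_disjoint_in_normalize[OF G(1) y _ near])
    show "disjoint_seq x" unfolding disjoint_seq_def x_def
      using ldisjoint_disjoint_seq_sums[OF f(1) As(1) As(1) D] by blast
    show "(\<lambda>k. (1/2::real)^k) \<longlonglongrightarrow> 0" by (rule LIMSEQ_realpow_zero) auto
  qed
  moreover have "(\<lambda>k. norm (S ((1 / norm (y k)) *\<^sub>R y k))) \<longlonglongrightarrow> 0"
  proof (rule Lim_null_comparison)
    show "\<forall>\<^sub>F k in sequentially. norm (norm (S ((1 / norm (y k)) *\<^sub>R y k))) \<le> 2 / real (Suc k) + K * (1/2)^k"
      using Sy y(2) by (simp add: linear_scale[OF bounded_linear.linear[OF S]] divide_le_eq)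
    have "(\<lambda>k. 2 / real (Suc k)) \<longlonglongrightarrow> 0"
      using LIMSEQ_Suc[OF lim_const_over_n[of "2::real"]] .
    then show "(\<lambda>k. 2 / real (Suc k) + K * (1/2::real)^k) \<longlonglongrightarrow> 0"
      using tendsto_add[OF _ tendsto_mult_right_zero[OF LIMSEQ_realpow_zero[of "1/2::real"]]] by simp
  qed
  ultimately show ?thesis by blast
qed

theorem proposition5p10:
  fixes S :: "'f::banach_lattice \<Rightarrow> 'e::banach"
  assumes "bounded_linear S"
  defines "C1 \<equiv> (\<forall>f::nat \<Rightarrow> 'f. (\<forall>n. f n \<noteq> 0) \<and> disjoint_seq f \<longrightarrow>
                    \<not> bounded_below_on S (closure (span (range f))))"
      and "C2 \<equiv> (\<forall>f::nat \<Rightarrow> 'f. (\<forall>n. f n \<noteq> 0) \<and> disjoint_seq f \<longrightarrow>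
                    strictly_singular_on S (closure (span (range f))))"
      and "C3 \<equiv> (\<forall>G::'f set. anti_dispersed G \<longrightarrow> strictly_singular_on S G)"
      and "C4 \<equiv> (\<forall>G::'f set. closed_subspace G \<and> \<not> dispersed G \<longrightarrow> \<not> bounded_below_on S G)"
      and "C5 \<equiv> (\<forall>G::'f set. closed_subspace G \<and> \<not> dispersed G \<longrightarrow> \<not> upper_semi_fredholm_on S G)"
      and "C6 \<equiv> (\<forall>G::'f set. closed_subspace G \<and> \<not> dispersed G \<longrightarrow>
                    (\<exists>g. almost_disjoint_in G g \<and> (\<lambda>n. norm (S (g n))) \<longlonglongrightarrow> 0))"
  shows "(C1 \<longleftrightarrow> C2) \<and> (C1 \<longleftrightarrow> C3) \<and> (C1 \<longleftrightarrow> C4) \<and> (C1 \<longleftrightarrow> C5) \<and> (C1 \<longleftrightarrow> C6)"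
proof -
  note S = assms(1)
  have "C1 \<Longrightarrow> C6"
    unfolding C1_def C6_def closed_subspace_def
    using almost_disjoint_null_if_disjoint_spans_not_bounded_below[OF S] by blast
  moreover have "C6 \<Longrightarrow> C5"
    unfolding C5_def C6_def using not_upper_semi_fredholm_on_if_almost_disjoint_null[OF S] by blast
  moreover have "C5 \<Longrightarrow> C4"
    unfolding C4_def C5_def using upper_semi_fredholm_on_if_bounded_below[OF S] by blast
  moreover have "C4 \<Longrightarrow> C3"
    unfolding C3_def C4_def anti_dispersed_def closed_subspace_def
    using strictly_singular_onI_closed[OF S] by (simp add: closed_subspace_def)
  moreover have "C3 \<Longrightarrow> C2"
    unfolding C2_def C3_def using anti_dispersed_closure_span_disjoint_seq by blast
  moreover have "C2 \<Longrightarrow> C1"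
    unfolding C1_def C2_def strictly_singular_on_def
    using subspace_closure[OF subspace_span] infinite_dimensional_closure_span_disjoint_seq by blast
  ultimately show ?thesis by blast
qed

end
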